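(* Let $r\ge 2$ be a prime and $G$ a finite group with $s$ conjugacy classes, exactly $d$ of which are not $r$-th powers in $G$. Then the number $\mathcal{CC}_r(G\wr S_n)$ of conjugacy classes of $G\wr S_n$ consisting of $r$-th powers is $$\mathcal{CC}_r(G\wr S_n)=\sum_{(n_1,\dots,n_s)}p_r(n_1)\cdots p_r(n_d)\,p_r'(n_{d+1})\cdots p_r'(n_s),$$ where the sum runs over all ordered $s$-tuples $(n_1,\dots,n_s)$ of integers $n_i\ge 0$ with $\sum_{i=1}^s n_i=n$.
   Context: $G\wr S_n$ is the set of pairs $(f,\pi)$ with $f:\{1,\dots,n\}\to G$ and $\pi\in S_n$, with product $(f,\pi)(f',\pi')=(ff'_\pi,\pi\pi')$, $f'_\pi(i)=f'(\pi^{-1}(i))$, pointwise product of functions. A conjugacy class of a group is an $r$-th power if all its elements are $r$-th powers in that group. For a partition $\lambda=1^{m_1}2^{m_2}\cdots$ of $n$ ($m_i$ = number of parts equal to $i$): $p_r(n)$ is the number of partitions of $n$ with $r\mid m_i$ for every $i\ge1$, and $p_r'(n)$ is the number of partitions of $n$ with $r\mid m_{ri}$ for every $i\ge 1$. By convention $p_r(0)=p_r'(0)=1$. *)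

theory Defs
  imports "HOL-Computational_Algebra.Primes" "HOL-Algebra.Group" "HOL-Library.FuncSet" "HOL-Combinatorics.Permutations"
begin

definition conj_class :: "('a, 'b) monoid_scheme \<Rightarrow> 'a \<Rightarrow> 'a set" where
  "conj_class G x = {g \<otimes>\<^bsub>G\<^esub> x \<otimes>\<^bsub>G\<^esub> inv\<^bsub>G\<^esub> g | g. g \<in> carrier G}"

definition conj_classes :: "('a, 'b) monoid_scheme \<Rightarrow> 'a set set" where
  "conj_classes G = conj_class G ` carrier G"

definition is_rth_power_class :: "('a, 'b) monoid_scheme \<Rightarrow> nat \<Rightarrow> 'a set \<Rightarrow> bool" where
  "is_rth_power_class G r C \<longleftrightarrow> (\<forall>y\<in>C. \<exists>z\<in>carrier G. y = z [^]\<^bsub>G\<^esub> r)"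

definition CC :: "nat \<Rightarrow> ('a, 'b) monoid_scheme \<Rightarrow> nat" where
  "CC r G = card {C \<in> conj_classes G. is_rth_power_class G r C}"

text \<open>Wreath product G wr S_n: pairs (f, pi) with f : {1..n} -> carrier G (extensional)
  and pi a permutation of {1..n};
  (f,pi)(f',pi') = (f f'_pi, pi pi') with f'_pi(i) = f'(pi^-1(i)).\<close>
definition wreath :: "('a, 'b) monoid_scheme \<Rightarrow> nat \<Rightarrow> ((nat \<Rightarrow> 'a) \<times> (nat \<Rightarrow> nat)) monoid" where
  "wreath G n = \<lparr> carrier = {(f, \<pi>). f \<in> {1..n} \<rightarrow>\<^sub>E carrier G \<and> \<pi> permutes {1..n}},
     monoid.mult = (\<lambda>(f, \<pi>) (f', \<pi>'). ((\<lambda>i\<in>{1..n}. f i \<otimes>\<^bsub>G\<^esub> f' (Hilbert_Choice.inv \<pi> i)), \<pi> \<circ> \<pi>')),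
     monoid.one = ((\<lambda>i\<in>{1..n}. \<one>\<^bsub>G\<^esub>), id) \<rparr>"

text \<open>Partitions of n encoded by multiplicity functions m (m i = number of parts equal to i).\<close>
definition partition_mults :: "nat \<Rightarrow> (nat \<Rightarrow> nat) set" where
  "partition_mults n = {m. (\<forall>i. m i \<noteq> 0 \<longrightarrow> 1 \<le> i \<and> i \<le> n) \<and> (\<Sum>i=1..n. i * m i) = n}"

definition p_r :: "nat \<Rightarrow> nat \<Rightarrow> nat" where
  "p_r r n = card {m \<in> partition_mults n. \<forall>i\<ge>1. r dvd m i}"

definition p_r' :: "nat \<Rightarrow> nat \<Rightarrow> nat" where
  "p_r' r n = card {m \<in> partition_mults n. \<forall>i\<ge>1. r dvd m (r * i)}"

end

theory Submission
  imports Defs "HOL-Combinatorics.Orbits"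
begin

(* An element x = (f, pi) of G wr S_n splits {1..n} into the cycles of pi. Give each point the
   length k of its cycle and the conjugacy class C of its cycle product (the entry of x^k at that
   point); the type of x counts the points with each label (k, C). The type is a complete
   invariant of the conjugacy class of x, and the types that occur are exactly the functions T
   with k dvd T (k, C) summing to n. Taking r-th powers (r prime) splits a cycle of length k into
   r cycles of length k/r with the same class if r divides k, and otherwise keeps the length and
   raises the class to the r-th power. Hence the class of x consists of r-th powers iff r k
   divides T (k, C) whenever C is not an r-th power class or r divides k. In terms of the cycle
   multiplicities m_k = T (k, C) / k, a partition of the number of points of class C, this reads
   r dvd m_k for all k, resp. r dvd m_(r k), which gives p_r resp. p_r' choices per class. *)

definition period :: "('a \<Rightarrow> 'a) \<Rightarrow> 'a \<Rightarrow> nat" where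
  "period q i = (LEAST k. 0 < k \<and> (q ^^ k) i = i)"

definition orbit_rep :: "('a::linorder \<Rightarrow> 'a) \<Rightarrow> 'a \<Rightarrow> 'a" where
  "orbit_rep q i = Min (orbit q i)"

context
  fixes q :: "'a \<Rightarrow> 'a"
  assumes perm: "permutation q"
begin

lemma period_pos: "0 < period q i"
  and funpow_period: "(q ^^ period q i) i = i"
proof -
  obtain k where "0 < k" "(q ^^ k) i = i"
    using permutation_self[OF perm] by blast
  then show "0 < period q i" "(q ^^ period q i) i = i"
    using LeastI[of "\<lambda>k. 0 < k \<and> (q ^^ k) i = i"] unfolding period_def by auto
qed

lemma funpow_eq_self_iff_period_dvd: "(q ^^ m) i = i \<longleftrightarrow> period q i dvd m"
proof
  assume "(q ^^ m) i = i"
  then have "(q ^^ (m mod period q i)) i = i"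
    using funpow_mod_eq[OF funpow_period] by simp
  then have "m mod period q i = 0"
    using not_less_Least[of "m mod period q i" "\<lambda>k. 0 < k \<and> (q ^^ k) i = i"] period_pos
    unfolding period_def[symmetric] by (metis mod_less_divisor neq0_conv)
  then show "period q i dvd m" by auto
next
  assume "period q i dvd m"
  then show "(q ^^ m) i = i"
    using funpow_mod_eq[OF funpow_period, of m i] by simp
qed

lemma funpow_eq_funpow_iff: "(q ^^ a) i = (q ^^ b) i \<longleftrightarrow> a mod period q i = b mod period q i"
proof -
  have *: "(q ^^ a) i = (q ^^ b) i \<longleftrightarrow> a mod period q i = b mod period q i" if "a \<le> b" for a b
  proof -
    have "(q ^^ b) i = (q ^^ a) ((q ^^ (b - a)) i)"
      using that by (metis funpow_add le_add_diff_inverse o_apply)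
    moreover have "inj (q ^^ a)"
      using permutation_bijective[OF perm] by (simp add: bij_is_inj inj_fn)
    ultimately have "(q ^^ a) i = (q ^^ b) i \<longleftrightarrow> (q ^^ (b - a)) i = i"
      by (metis injD)
    also have "\<dots> \<longleftrightarrow> a mod period q i = b mod period q i"
      using mod_eq_dvd_iff_nat[OF that, of "period q i"] funpow_eq_self_iff_period_dvd[of "b - a" i]
      by auto
    finally show ?thesis .
  qed
  show ?thesis
    by (cases "a \<le> b") (use *[of a b] *[of b a] in auto)
qed

lemma period_funpow: "period q ((q ^^ j) i) = period q i"
proof -
  have "(q ^^ k) ((q ^^ j) i) = (q ^^ j) i \<longleftrightarrow> (q ^^ k) i = i" for k
  proof -
    have "(q ^^ k) ((q ^^ j) i) = (q ^^ (k + j)) i"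
      by (simp add: funpow_add)
    then show ?thesis
      using funpow_eq_funpow_iff[of "k + j" i j] funpow_eq_self_iff_period_dvd[of k i]
      by (simp add: mod_eq_dvd_iff_nat)
  qed
  then show ?thesis unfolding period_def by simp
qed

lemma orbit_eq_funpow_image: "orbit q i = (\<lambda>j. (q ^^ j) i) ` {..<period q i}"
  using orbit_altdef_bounded[OF funpow_period period_pos] by auto

lemma funpow_in_orbit_self: "(q ^^ j) i \<in> orbit q i"
  using orbit_altdef_permutation[OF perm] by auto

lemma card_orbit: "card (orbit q i) = period q i"
proof -
  have "inj_on (\<lambda>j. (q ^^ j) i) {..<period q i}"
    by (rule inj_onI) (simp add: funpow_eq_funpow_iff)
  then show ?thesis unfolding orbit_eq_funpow_image by (simp add: card_image)
qed

lemma finite_orbit_perm: "finite (orbit q i)"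
  unfolding orbit_eq_funpow_image by simp

lemma orbit_eq_of_mem: "y \<in> orbit q i \<Longrightarrow> orbit q y = orbit q i"
  using cyclic_on_orbit'[OF perm] orbit_cyclic_eq3 by metis

lemma mem_orbit_sym: "y \<in> orbit q i \<Longrightarrow> i \<in> orbit q y"
  using orbit_eq_of_mem permutation_self_in_orbit[OF perm] by blast

end

context
  fixes q :: "'a::linorder \<Rightarrow> 'a"
  assumes perm: "permutation q"
begin

lemma orbit_rep_in_orbit: "orbit_rep q i \<in> orbit q i"
  unfolding orbit_rep_def
  using finite_orbit_perm[OF perm] orbit_nonempty by (rule Min_in)

lemma orbit_rep_eq: "y \<in> orbit q i \<Longrightarrow> orbit_rep q y = orbit_rep q i"
  unfolding orbit_rep_def using orbit_eq_of_mem[OF perm] by simp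

lemma orbit_rep_idem: "orbit_rep q (orbit_rep q i) = orbit_rep q i"
  using orbit_rep_eq orbit_rep_in_orbit by blast

lemma orbit_rep_funpow: "orbit_rep q ((q ^^ j) i) = orbit_rep q i"
  using orbit_rep_eq funpow_in_orbit_self[OF perm] by blast

lemma funpow_dist_orbit_rep:
  "(q ^^ funpow_dist q (orbit_rep q i) i) (orbit_rep q i) = i"
  "funpow_dist q (orbit_rep q i) i < period q (orbit_rep q i)"
proof -
  have "i \<in> orbit q (orbit_rep q i)"
    using mem_orbit_sym[OF perm orbit_rep_in_orbit] .
  then obtain j where j: "j < period q (orbit_rep q i)" "(q ^^ j) (orbit_rep q i) = i"
    unfolding orbit_eq_funpow_image[OF perm] by auto
  then show "(q ^^ funpow_dist q (orbit_rep q i) i) (orbit_rep q i) = i"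
    "funpow_dist q (orbit_rep q i) i < period q (orbit_rep q i)"
    unfolding funpow_dist_def by (auto intro: LeastI Least_le[THEN le_less_trans])
qed

lemma funpow_dist_funpow: "j < period q b \<Longrightarrow> funpow_dist q b ((q ^^ j) b) = j"
  unfolding funpow_dist_def
proof (rule Least_equality)
  fix k assume "j < period q b" "(q ^^ k) b = (q ^^ j) b"
  then have "k mod period q b = j" by (simp add: funpow_eq_funpow_iff[OF perm])
  then show "j \<le> k" by (metis mod_less_eq_dividend)
qed simp

end

context group
begin

lemma inv_mult_cancel_left: "g \<in> carrier G \<Longrightarrow> w \<in> carrier G \<Longrightarrow> inv g \<otimes> (g \<otimes> w) = w"
  and mult_inv_cancel_left: "g \<in> carrier G \<Longrightarrow> w \<in> carrier G \<Longrightarrow> g \<otimes> (inv g \<otimes> w) = w"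
  by (simp_all add: m_assoc[symmetric])

lemma conj_class_self: "x \<in> carrier G \<Longrightarrow> x \<in> conj_class G x"
  unfolding conj_class_def by (rule CollectI, rule exI[of _ \<one>]) simp

lemma conj_class_subset: "x \<in> carrier G \<Longrightarrow> conj_class G x \<subseteq> carrier G"
  unfolding conj_class_def by auto

lemma conj_class_in_conj_classes: "x \<in> carrier G \<Longrightarrow> conj_class G x \<in> conj_classes G"
  unfolding conj_classes_def by simp

lemma finite_conj_classes: "finite (carrier G) \<Longrightarrow> finite (conj_classes G)"
  unfolding conj_classes_def by simp

lemma conj_class_conj:
  assumes g: "g \<in> carrier G" and x: "x \<in> carrier G"
  shows "conj_class G (g \<otimes> x \<otimes> inv g) = conj_class G x"
proof
  show "conj_class G (g \<otimes> x \<otimes> inv g) \<subseteq> conj_class G x"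
  proof
    fix y assume "y \<in> conj_class G (g \<otimes> x \<otimes> inv g)"
    then obtain h where h: "h \<in> carrier G" "y = h \<otimes> (g \<otimes> x \<otimes> inv g) \<otimes> inv h"
      unfolding conj_class_def by auto
    then have "y = (h \<otimes> g) \<otimes> x \<otimes> inv (h \<otimes> g)"
      using g x by (simp add: inv_mult_group m_assoc)
    then show "y \<in> conj_class G x" unfolding conj_class_def using h g by blast
  qed
next
  show "conj_class G x \<subseteq> conj_class G (g \<otimes> x \<otimes> inv g)"
  proof
    fix y assume "y \<in> conj_class G x"
    then obtain h where h: "h \<in> carrier G" "y = h \<otimes> x \<otimes> inv h"
      unfolding conj_class_def by auto
    then have "y = (h \<otimes> inv g) \<otimes> (g \<otimes> x \<otimes> inv g) \<otimes> inv (h \<otimes> inv g)"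
      using g x by (simp add: inv_mult_group m_assoc inv_mult_cancel_left)
    then show "y \<in> conj_class G (g \<otimes> x \<otimes> inv g)" unfolding conj_class_def using h g by blast
  qed
qed

lemma conj_class_eq_iff:
  assumes x: "x \<in> carrier G" and y: "y \<in> carrier G"
  shows "conj_class G x = conj_class G y \<longleftrightarrow> y \<in> conj_class G x"
proof
  assume "y \<in> conj_class G x"
  then obtain g where "g \<in> carrier G" "y = g \<otimes> x \<otimes> inv g" unfolding conj_class_def by auto
  then show "conj_class G x = conj_class G y" using conj_class_conj x by simp
qed (use conj_class_self[OF y] in simp)

lemma conj_nat_pow:
  assumes g: "g \<in> carrier G" and x: "x \<in> carrier G"
  shows "(g \<otimes> x \<otimes> inv g) [^] (k::nat) = g \<otimes> x [^] k \<otimes> inv g"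
proof (induct k)
  case (Suc k)
  then show ?case
    using g x by (simp add: m_assoc inv_mult_cancel_left)
qed (use g in simp)

lemma conj_class_nat_pow:
  assumes x: "x \<in> carrier G"
  shows "conj_class G (x [^] (k::nat)) = (\<lambda>y. y [^] k) ` conj_class G x"
proof -
  have "conj_class G (x [^] k) = (\<lambda>g. (g \<otimes> x \<otimes> inv g) [^] k) ` carrier G"
    unfolding conj_class_def using conj_nat_pow[OF _ x] by auto
  also have "\<dots> = (\<lambda>y. y [^] k) ` conj_class G x"
    unfolding conj_class_def by auto
  finally show ?thesis .
qed

end

declare One_nat_def [simp del]

lemma wreath_carrier:
  "x \<in> carrier (wreath G n) \<longleftrightarrow> fst x \<in> {1..n} \<rightarrow>\<^sub>E carrier G \<and> snd x permutes {1..n}"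
  by (cases x) (simp add: wreath_def)

lemma wreath_mult:
  "x \<otimes>\<^bsub>wreath G n\<^esub> y =
    ((\<lambda>i\<in>{1..n}. fst x i \<otimes>\<^bsub>G\<^esub> fst y (Hilbert_Choice.inv (snd x) i)), snd x \<circ> snd y)"
  by (cases x, cases y) (simp add: wreath_def)

lemma wreath_one: "\<one>\<^bsub>wreath G n\<^esub> = ((\<lambda>i\<in>{1..n}. \<one>\<^bsub>G\<^esub>), id)"
  by (simp add: wreath_def)

lemma permutes_inv_in: "p permutes S \<Longrightarrow> i \<in> S \<Longrightarrow> Hilbert_Choice.inv p i \<in> S"
  by (simp add: permutes_in_image permutes_inv)

context group
begin

lemma wreath_fst_closed: "x \<in> carrier (wreath G n) \<Longrightarrow> i \<in> {1..n} \<Longrightarrow> fst x i \<in> carrier G"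
  by (metis PiE_mem wreath_carrier)

lemma wreath_mult_closed:
  assumes "x \<in> carrier (wreath G n)" "y \<in> carrier (wreath G n)"
  shows "x \<otimes>\<^bsub>wreath G n\<^esub> y \<in> carrier (wreath G n)"
proof -
  have p: "snd x permutes {1..n}" "snd y permutes {1..n}"
    using assms by (auto simp: wreath_carrier)
  show ?thesis
    using p wreath_fst_closed[OF assms(1)] wreath_fst_closed[OF assms(2) permutes_inv_in[OF p(1)]]
    by (simp add: wreath_carrier wreath_mult restrict_PiE_iff permutes_compose)
qed

lemma wreath_mult_assoc:
  assumes x: "x \<in> carrier (wreath G n)" and y: "y \<in> carrier (wreath G n)"
    and z: "z \<in> carrier (wreath G n)"
  shows "x \<otimes>\<^bsub>wreath G n\<^esub> y \<otimes>\<^bsub>wreath G n\<^esub> z = x \<otimes>\<^bsub>wreath G n\<^esub> (y \<otimes>\<^bsub>wreath G n\<^esub> z)"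
proof -
  have p: "snd x permutes {1..n}" and p': "snd y permutes {1..n}"
    using x y by (auto simp: wreath_carrier)
  have "fst (x \<otimes>\<^bsub>wreath G n\<^esub> y \<otimes>\<^bsub>wreath G n\<^esub> z) i
      = fst (x \<otimes>\<^bsub>wreath G n\<^esub> (y \<otimes>\<^bsub>wreath G n\<^esub> z)) i" for i
  proof (cases "i \<in> {1..n}")
    case True
    then show ?thesis
      using wreath_fst_closed[OF x] wreath_fst_closed[OF y] wreath_fst_closed[OF z]
        permutes_inv_in[OF p] permutes_inv_in[OF p']
      by (simp add: wreath_mult o_inv_distrib permutes_bij[OF p] permutes_bij[OF p'] m_assoc)
  qed (auto simp: wreath_mult)
  then show ?thesis
    by (simp add: prod_eq_iff wreath_mult o_assoc ext)
qed

lemma wreath_l_inv: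
  assumes x: "x \<in> carrier (wreath G n)"
  defines "y \<equiv> ((\<lambda>i\<in>{1..n}. inv (fst x (snd x i))), Hilbert_Choice.inv (snd x))"
  shows "y \<in> carrier (wreath G n)" and "y \<otimes>\<^bsub>wreath G n\<^esub> x = \<one>\<^bsub>wreath G n\<^esub>"
proof -
  have p: "snd x permutes {1..n}" using x by (simp add: wreath_carrier)
  have fp: "fst x (snd x i) \<in> carrier G" if "i \<in> {1..n}" for i
    using wreath_fst_closed[OF x] permutes_in_image[OF p] that by blast
  show "y \<in> carrier (wreath G n)"
    using fp p by (auto simp: y_def wreath_carrier permutes_inv)
  show "y \<otimes>\<^bsub>wreath G n\<^esub> x = \<one>\<^bsub>wreath G n\<^esub>"
    using fp p unfolding y_def wreath_one wreath_mult
    by (auto intro!: ext simp: permutes_inv_inv permutes_inv_o permutes_in_image)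
qed

lemma wreath_group: "group (wreath G n)"
proof (rule groupI)
  fix x assume x: "x \<in> carrier (wreath G n)"
  have f: "fst x \<in> {1..n} \<rightarrow>\<^sub>E carrier G"
    using x by (simp add: wreath_carrier)
  have "fst (\<one>\<^bsub>wreath G n\<^esub> \<otimes>\<^bsub>wreath G n\<^esub> x) = fst x"
    using PiE_mem[OF f] PiE_arb[OF f] by (auto simp: wreath_one wreath_mult inv_id)
  then show "\<one>\<^bsub>wreath G n\<^esub> \<otimes>\<^bsub>wreath G n\<^esub> x = x"
    by (simp add: prod_eq_iff wreath_one wreath_mult)
  show "\<exists>y\<in>carrier (wreath G n). y \<otimes>\<^bsub>wreath G n\<^esub> x = \<one>\<^bsub>wreath G n\<^esub>"
    using wreath_l_inv[OF x] by blast
next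
  show "\<one>\<^bsub>wreath G n\<^esub> \<in> carrier (wreath G n)"
    by (simp add: wreath_one wreath_carrier permutes_id)
qed (simp_all add: wreath_mult_closed wreath_mult_assoc)

lemma wreath_inv:
  assumes x: "x \<in> carrier (wreath G n)"
  shows "inv\<^bsub>wreath G n\<^esub> x = ((\<lambda>i\<in>{1..n}. inv (fst x (snd x i))), Hilbert_Choice.inv (snd x))"
  using group.inv_equality[OF wreath_group wreath_l_inv(2)[OF x] x wreath_l_inv(1)[OF x]] .

end

text \<open>With \<open>\<sigma> = inv \<pi>\<close>, the \<open>i\<close>-th entry of \<open>(f, \<pi>) ^ k\<close> is \<open>f i \<otimes> f (\<sigma> i) \<otimes> \<dots> \<otimes> f (\<sigma>^(k-1) i)\<close>:
  cycles are traversed along \<open>\<sigma> = wr_succ (f, \<pi>)\<close>, and a full turn gives the cycle product. The type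
  counts points rather than cycles; the label \<open>(k, C)\<close> occurs on \<open>wr_type G n x (k, C) div k\<close> cycles.\<close>

definition wr_succ :: "('x \<times> (nat \<Rightarrow> nat)) \<Rightarrow> nat \<Rightarrow> nat" where
  "wr_succ x = Hilbert_Choice.inv (snd x)"

definition wr_cycle_len :: "('x \<times> (nat \<Rightarrow> nat)) \<Rightarrow> nat \<Rightarrow> nat" where
  "wr_cycle_len x i = period (wr_succ x) i"

definition wr_cycle_prod ::
    "('a, 'b) monoid_scheme \<Rightarrow> nat \<Rightarrow> (nat \<Rightarrow> 'a) \<times> (nat \<Rightarrow> nat) \<Rightarrow> nat \<Rightarrow> 'a" where
  "wr_cycle_prod G n x i = fst (x [^]\<^bsub>wreath G n\<^esub> wr_cycle_len x i) i"

definition wr_label ::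
    "('a, 'b) monoid_scheme \<Rightarrow> nat \<Rightarrow> (nat \<Rightarrow> 'a) \<times> (nat \<Rightarrow> nat) \<Rightarrow> nat \<Rightarrow> nat \<times> 'a set" where
  "wr_label G n x i = (wr_cycle_len x i, conj_class G (wr_cycle_prod G n x i))"

definition wr_type ::
    "('a, 'b) monoid_scheme \<Rightarrow> nat \<Rightarrow> (nat \<Rightarrow> 'a) \<times> (nat \<Rightarrow> nat) \<Rightarrow> nat \<times> 'a set \<Rightarrow> nat" where
  "wr_type G n x v = card {i \<in> {1..n}. wr_label G n x i = v}"

definition wr_cycle_reps :: "nat \<Rightarrow> ('x \<times> (nat \<Rightarrow> nat)) \<Rightarrow> nat set" where
  "wr_cycle_reps n x = {b \<in> {1..n}. orbit_rep (wr_succ x) b = b}"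

lemma wr_succ_permutes: "x \<in> carrier (wreath G n) \<Longrightarrow> wr_succ x permutes {1..n}"
  unfolding wr_succ_def wreath_carrier by (rule permutes_inv) simp

lemma permutation_wr_succ: "x \<in> carrier (wreath G n) \<Longrightarrow> permutation (wr_succ x)"
  using wr_succ_permutes permutation_permutes by blast

lemma wreath_pow_snd: "snd (x [^]\<^bsub>wreath G n\<^esub> k) = snd x ^^ k"
  by (induct k) (simp_all add: wreath_one wreath_mult funpow_Suc_right del: funpow.simps)

context group
begin

lemma wreath_monoid: "monoid (wreath G n)"
  by (rule group.is_monoid[OF wreath_group])

lemma wreath_pow_closed: "x \<in> carrier (wreath G n) \<Longrightarrow> x [^]\<^bsub>wreath G n\<^esub> (k::nat) \<in> carrier (wreath G n)"
  by (rule monoid.nat_pow_closed[OF wreath_monoid])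

lemma wreath_pow_1: "x \<in> carrier (wreath G n) \<Longrightarrow> x [^]\<^bsub>wreath G n\<^esub> (1::nat) = x"
  using monoid.l_one[OF wreath_monoid] by (simp add: One_nat_def)

lemma wreath_pow_fst_closed:
  "x \<in> carrier (wreath G n) \<Longrightarrow> i \<in> {1..n} \<Longrightarrow> fst (x [^]\<^bsub>wreath G n\<^esub> (k::nat)) i \<in> carrier G"
  by (rule wreath_fst_closed[OF wreath_pow_closed])

lemma wr_succ_pow:
  "x \<in> carrier (wreath G n) \<Longrightarrow> wr_succ (x [^]\<^bsub>wreath G n\<^esub> k) = wr_succ x ^^ k"
proof -
  assume "x \<in> carrier (wreath G n)"
  then have "bij (snd x)" by (metis permutes_bij wreath_carrier)
  then show ?thesis unfolding wr_succ_def wreath_pow_snd by (rule inv_fn)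
qed

lemma wreath_pow_fst_add:
  assumes x: "x \<in> carrier (wreath G n)" and i: "i \<in> {1..n}"
  shows "fst (x [^]\<^bsub>wreath G n\<^esub> (a + b)) i
    = fst (x [^]\<^bsub>wreath G n\<^esub> a) i \<otimes> fst (x [^]\<^bsub>wreath G n\<^esub> b) ((wr_succ x ^^ a) i)"
proof -
  have "x [^]\<^bsub>wreath G n\<^esub> (a + b) = x [^]\<^bsub>wreath G n\<^esub> a \<otimes>\<^bsub>wreath G n\<^esub> x [^]\<^bsub>wreath G n\<^esub> b"
    using monoid.nat_pow_mult[OF wreath_monoid x] by simp
  moreover have "Hilbert_Choice.inv (snd (x [^]\<^bsub>wreath G n\<^esub> a)) = wr_succ x ^^ a"
    using wr_succ_pow[OF x, of a] unfolding wr_succ_def .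
  ultimately show ?thesis
    using i by (simp only: wreath_mult fst_conv restrict_apply')
qed

lemma wreath_pow_fst_Suc:
  assumes x: "x \<in> carrier (wreath G n)" and i: "i \<in> {1..n}"
  shows "fst (x [^]\<^bsub>wreath G n\<^esub> Suc k) i = fst (x [^]\<^bsub>wreath G n\<^esub> k) i \<otimes> fst x ((wr_succ x ^^ k) i)"
  using wreath_pow_fst_add[OF x i, of k "Suc 0"] wreath_pow_1[OF x] by (simp add: One_nat_def del: Group.nat_pow_Suc)

lemma wreath_pow_fst_Suc':
  assumes x: "x \<in> carrier (wreath G n)" and i: "i \<in> {1..n}"
  shows "fst (x [^]\<^bsub>wreath G n\<^esub> Suc k) i = fst x i \<otimes> fst (x [^]\<^bsub>wreath G n\<^esub> k) (wr_succ x i)"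
  using wreath_pow_fst_add[OF x i, of "Suc 0" k] wreath_pow_1[OF x] by (simp add: One_nat_def del: Group.nat_pow_Suc)

lemma wr_cycle_len_pos: "x \<in> carrier (wreath G n) \<Longrightarrow> 0 < wr_cycle_len x i"
  unfolding wr_cycle_len_def by (rule period_pos[OF permutation_wr_succ])

lemma funpow_wr_cycle_len: "x \<in> carrier (wreath G n) \<Longrightarrow> (wr_succ x ^^ wr_cycle_len x i) i = i"
  unfolding wr_cycle_len_def by (rule funpow_period[OF permutation_wr_succ])

lemma wr_cycle_prod_closed:
  "x \<in> carrier (wreath G n) \<Longrightarrow> i \<in> {1..n} \<Longrightarrow> wr_cycle_prod G n x i \<in> carrier G"
  unfolding wr_cycle_prod_def by (rule wreath_pow_fst_closed)

lemma wr_succ_in: "x \<in> carrier (wreath G n) \<Longrightarrow> i \<in> {1..n} \<Longrightarrow> wr_succ x i \<in> {1..n}"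
  using permutes_in_image[OF wr_succ_permutes] by blast

lemma wr_cycle_len_succ: "x \<in> carrier (wreath G n) \<Longrightarrow> wr_cycle_len x (wr_succ x i) = wr_cycle_len x i"
  using period_funpow[OF permutation_wr_succ, of x G n "Suc 0" i] unfolding wr_cycle_len_def by simp

lemma wr_cycle_prod_succ:
  assumes x: "x \<in> carrier (wreath G n)" and i: "i \<in> {1..n}"
  shows "wr_cycle_prod G n x (wr_succ x i) = inv (fst x i) \<otimes> wr_cycle_prod G n x i \<otimes> fst x i"
proof -
  let ?L = "wr_cycle_len x i" and ?c = "wr_cycle_prod G n x"
  have f: "fst x i \<in> carrier G" using wreath_fst_closed[OF x i] .
  have "fst x i \<otimes> ?c (wr_succ x i) = fst (x [^]\<^bsub>wreath G n\<^esub> Suc ?L) i"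
    using wreath_pow_fst_Suc'[OF x i, of ?L] wr_cycle_len_succ[OF x, of i]
    unfolding wr_cycle_prod_def by simp
  also have "\<dots> = ?c i \<otimes> fst x i"
    using wreath_pow_fst_Suc[OF x i, of ?L] funpow_wr_cycle_len[OF x, of i]
    unfolding wr_cycle_prod_def by simp
  finally show ?thesis
    using f wr_cycle_prod_closed[OF x i] wr_cycle_prod_closed[OF x wr_succ_in[OF x i]]
    by (metis inv_solve_left m_assoc m_closed inv_closed)
qed

lemma wr_label_succ:
  assumes x: "x \<in> carrier (wreath G n)" and i: "i \<in> {1..n}"
  shows "wr_label G n x (wr_succ x i) = wr_label G n x i"
proof -
  have f: "inv (fst x i) \<in> carrier G" using wreath_fst_closed[OF x i] by simp
  have "conj_class G (wr_cycle_prod G n x (wr_succ x i)) = conj_class G (wr_cycle_prod G n x i)"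
    using wr_cycle_prod_succ[OF x i] conj_class_conj[OF f wr_cycle_prod_closed[OF x i]]
      wreath_fst_closed[OF x i] by simp
  then show ?thesis unfolding wr_label_def using wr_cycle_len_succ[OF x] by simp
qed

lemma wr_label_funpow:
  assumes x: "x \<in> carrier (wreath G n)" and i: "i \<in> {1..n}"
  shows "wr_label G n x ((wr_succ x ^^ j) i) = wr_label G n x i"
proof (induct j)
  case (Suc j)
  have "(wr_succ x ^^ j) i \<in> {1..n}"
    using permutes_in_funpow_image[OF wr_succ_permutes[OF x] i] .
  then show ?case using wr_label_succ[OF x] Suc by simp
qed simp

lemma wr_label_orbit:
  assumes x: "x \<in> carrier (wreath G n)" and i: "i \<in> {1..n}" and y: "y \<in> orbit (wr_succ x) i"
  shows "wr_label G n x y = wr_label G n x i"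
  using y wr_label_funpow[OF x i] orbit_altdef_permutation[OF permutation_wr_succ[OF x]] by auto

lemma wreath_pow_cycle_len_mult:
  assumes x: "x \<in> carrier (wreath G n)" and i: "i \<in> {1..n}"
  shows "fst (x [^]\<^bsub>wreath G n\<^esub> (wr_cycle_len x i * q)) i = wr_cycle_prod G n x i [^] q"
proof (induct q)
  case (Suc q)
  have "(wr_succ x ^^ (wr_cycle_len x i * q)) i = i"
    using funpow_eq_self_iff_period_dvd[OF permutation_wr_succ[OF x]]
    unfolding wr_cycle_len_def by simp
  then show ?case
    using wreath_pow_fst_add[OF x i, of "wr_cycle_len x i * q" "wr_cycle_len x i"] Suc
    unfolding wr_cycle_prod_def by (simp add: add.commute)
qed (use i in \<open>simp add: wreath_one\<close>)

lemma wr_cycle_len_le: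
  assumes x: "x \<in> carrier (wreath G n)" and i: "i \<in> {1..n}"
  shows "wr_cycle_len x i \<le> n"
proof -
  have "card (orbit (wr_succ x) i) \<le> card {1..n}"
    using permutes_orbit_subset[OF wr_succ_permutes[OF x] i] by (intro card_mono) auto
  then show ?thesis
    using card_orbit[OF permutation_wr_succ[OF x]] unfolding wr_cycle_len_def by simp
qed

end

section \<open>Types are conjugacy invariants\<close>

context group
begin

lemma wr_type_eq:
  assumes x: "x \<in> carrier (wreath G n)"
  shows "wr_type G n x (k, C) = k * card {b \<in> wr_cycle_reps n x. wr_label G n x b = (k, C)}"
proof -
  let ?q = "wr_succ x" and ?B = "{b \<in> wr_cycle_reps n x. wr_label G n x b = (k, C)}"
  have q: "permutation ?q" using permutation_wr_succ[OF x] .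
  have "{i \<in> {1..n}. wr_label G n x i = (k, C)} = (\<Union>b\<in>?B. orbit ?q b)"
  proof (intro equalityI subsetI)
    fix i assume "i \<in> {i \<in> {1..n}. wr_label G n x i = (k, C)}"
    then have i: "i \<in> {1..n}" and l: "wr_label G n x i = (k, C)" by auto
    have b: "orbit_rep ?q i \<in> orbit ?q i" using orbit_rep_in_orbit[OF q] .
    have "orbit_rep ?q i \<in> ?B"
      using permutes_orbit_subset[OF wr_succ_permutes[OF x] i] b orbit_rep_idem[OF q]
        wr_label_orbit[OF x i b] l
      unfolding wr_cycle_reps_def by auto
    moreover have "i \<in> orbit ?q (orbit_rep ?q i)" using mem_orbit_sym[OF q b] .
    ultimately show "i \<in> (\<Union>b\<in>?B. orbit ?q b)" by blast
  next
    fix i assume "i \<in> (\<Union>b\<in>?B. orbit ?q b)"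
    then obtain b where b: "b \<in> ?B" and ib: "i \<in> orbit ?q b" by blast
    have bI: "b \<in> {1..n}" using b unfolding wr_cycle_reps_def by auto
    show "i \<in> {i \<in> {1..n}. wr_label G n x i = (k, C)}"
      using permutes_orbit_subset[OF wr_succ_permutes[OF x] bI] ib wr_label_orbit[OF x bI ib] b
      by auto
  qed
  moreover have "orbit ?q b1 \<inter> orbit ?q b2 = {}" if "b1 \<in> ?B" "b2 \<in> ?B" "b1 \<noteq> b2" for b1 b2
  proof (rule ccontr)
    assume "orbit ?q b1 \<inter> orbit ?q b2 \<noteq> {}"
    then obtain z where "z \<in> orbit ?q b1" "z \<in> orbit ?q b2" by blast
    then have "orbit_rep ?q b1 = orbit_rep ?q b2" using orbit_rep_eq[OF q] by metis
    then show False using that unfolding wr_cycle_reps_def by simp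
  qed
  moreover have "card (orbit ?q b) = k" if "b \<in> ?B" for b
    using that card_orbit[OF q] unfolding wr_label_def wr_cycle_len_def by auto
  moreover have "finite ?B" unfolding wr_cycle_reps_def by simp
  ultimately show ?thesis
    unfolding wr_type_def by (simp add: card_UN_disjoint finite_orbit_perm[OF q])
qed

lemma wr_succ_conj:
  assumes x: "x \<in> carrier (wreath G n)" and u: "u \<in> carrier (wreath G n)"
  shows "wr_succ (u \<otimes>\<^bsub>wreath G n\<^esub> x \<otimes>\<^bsub>wreath G n\<^esub> inv\<^bsub>wreath G n\<^esub> u)
    = snd u \<circ> wr_succ x \<circ> Hilbert_Choice.inv (snd u)"
proof -
  have su: "snd u permutes {1..n}" and sx: "snd x permutes {1..n}"
    using u x by (auto simp: wreath_carrier)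
  have "snd (u \<otimes>\<^bsub>wreath G n\<^esub> x \<otimes>\<^bsub>wreath G n\<^esub> inv\<^bsub>wreath G n\<^esub> u)
      = snd u \<circ> snd x \<circ> Hilbert_Choice.inv (snd u)"
    by (simp add: wreath_mult wreath_inv[OF u])
  moreover have "bij (snd u)" "bij (snd x)" "bij (Hilbert_Choice.inv (snd u))"
    using su sx permutes_bij[OF permutes_inv[OF su]] by (simp_all add: permutes_bij)
  ultimately show ?thesis
    unfolding wr_succ_def by (simp add: o_inv_distrib bij_comp inv_inv_eq o_assoc)
qed

lemma wr_succ_conj_funpow:
  assumes x: "x \<in> carrier (wreath G n)" and u: "u \<in> carrier (wreath G n)"
  shows "(wr_succ (u \<otimes>\<^bsub>wreath G n\<^esub> x \<otimes>\<^bsub>wreath G n\<^esub> inv\<^bsub>wreath G n\<^esub> u) ^^ k) (snd u i)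
    = snd u ((wr_succ x ^^ k) i)"
proof -
  have su: "snd u permutes {1..n}" using u by (simp add: wreath_carrier)
  show ?thesis
    by (induct k) (simp_all add: wr_succ_conj[OF x u] permutes_inverses(2)[OF su])
qed

lemma wreath_conj_fst:
  assumes u: "u \<in> carrier (wreath G n)" and y: "y \<in> carrier (wreath G n)"
    and i: "i \<in> {1..n}" and fix_i: "snd y i = i"
  shows "fst (u \<otimes>\<^bsub>wreath G n\<^esub> y \<otimes>\<^bsub>wreath G n\<^esub> inv\<^bsub>wreath G n\<^esub> u) (snd u i)
    = fst u (snd u i) \<otimes> fst y i \<otimes> inv (fst u (snd u i))"
proof -
  have su: "snd u permutes {1..n}" and sy: "snd y permutes {1..n}"
    using u y by (auto simp: wreath_carrier)
  have "snd u i \<in> {1..n}" using permutes_in_image[OF su] i by simp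
  moreover have "Hilbert_Choice.inv (snd y) i = i"
    using permutes_inv_eq[OF sy] fix_i by simp
  ultimately show ?thesis
    using i by (simp add: wreath_mult wreath_inv[OF u] o_inv_distrib permutes_bij[OF su]
        permutes_bij[OF sy] permutes_inverses(2)[OF su])
qed

lemma wr_label_conj:
  assumes x: "x \<in> carrier (wreath G n)" and u: "u \<in> carrier (wreath G n)"
    and i: "i \<in> {1..n}"
  shows "wr_label G n (u \<otimes>\<^bsub>wreath G n\<^esub> x \<otimes>\<^bsub>wreath G n\<^esub> inv\<^bsub>wreath G n\<^esub> u) (snd u i)
    = wr_label G n x i"
proof -
  let ?W = "wreath G n"
  let ?y = "u \<otimes>\<^bsub>?W\<^esub> x \<otimes>\<^bsub>?W\<^esub> inv\<^bsub>?W\<^esub> u" and ?L = "wr_cycle_len x i"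
  have su: "snd u permutes {1..n}" using u by (simp add: wreath_carrier)
  have "(wr_succ ?y ^^ k) (snd u i) = snd u i \<longleftrightarrow> (wr_succ x ^^ k) i = i" for k
    using wr_succ_conj_funpow[OF x u] permutes_inj[OF su] by (simp add: inj_eq)
  then have len: "wr_cycle_len ?y (snd u i) = ?L"
    unfolding wr_cycle_len_def period_def by simp
  have "bij (snd x)" using x by (metis permutes_bij wreath_carrier)
  then have "Hilbert_Choice.inv (snd x ^^ ?L) i = i" and "bij (snd x ^^ ?L)"
    using funpow_wr_cycle_len[OF x, of i] by (simp_all add: wr_succ_def inv_fn bij_fn)
  then have "snd (x [^]\<^bsub>?W\<^esub> ?L) i = i"
    unfolding wreath_pow_snd by (metis bij_inv_eq_iff)
  then have "wr_cycle_prod G n ?y (snd u i)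
      = fst u (snd u i) \<otimes> wr_cycle_prod G n x i \<otimes> inv (fst u (snd u i))"
    unfolding wr_cycle_prod_def len group.conj_nat_pow[OF wreath_group u x]
    using wreath_conj_fst[OF u wreath_pow_closed[OF x] i] by simp
  moreover have "fst u (snd u i) \<in> carrier G"
    using wreath_fst_closed[OF u] permutes_in_image[OF su] i by blast
  ultimately show ?thesis
    unfolding wr_label_def using len conj_class_conj wr_cycle_prod_closed[OF x i] by simp
qed

lemma wr_type_conj:
  assumes x: "x \<in> carrier (wreath G n)" and u: "u \<in> carrier (wreath G n)"
  shows "wr_type G n (u \<otimes>\<^bsub>wreath G n\<^esub> x \<otimes>\<^bsub>wreath G n\<^esub> inv\<^bsub>wreath G n\<^esub> u) = wr_type G n x"
proof
  fix v
  let ?y = "u \<otimes>\<^bsub>wreath G n\<^esub> x \<otimes>\<^bsub>wreath G n\<^esub> inv\<^bsub>wreath G n\<^esub> u"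
  have su: "snd u permutes {1..n}" using u by (simp add: wreath_carrier)
  have "{j \<in> {1..n}. wr_label G n ?y j = v} = snd u ` {i \<in> {1..n}. wr_label G n x i = v}"
  proof (intro equalityI subsetI)
    fix j assume j: "j \<in> {j \<in> {1..n}. wr_label G n ?y j = v}"
    let ?i = "Hilbert_Choice.inv (snd u) j"
    have "?i \<in> {1..n}" "snd u ?i = j"
      using j permutes_inv_in[OF su] permutes_inverses(1)[OF su] by auto
    then show "j \<in> snd u ` {i \<in> {1..n}. wr_label G n x i = v}"
      using wr_label_conj[OF x u] j by force
  qed (use wr_label_conj[OF x u] permutes_in_image[OF su] in auto)
  moreover have "inj_on (snd u) {i \<in> {1..n}. wr_label G n x i = v}"
    using permutes_inj[OF su] by (meson inj_on_subset subset_UNIV)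
  ultimately show "wr_type G n ?y v = wr_type G n x v" unfolding wr_type_def by (simp add: card_image)
qed

end

section \<open>Elements of equal type are conjugate\<close>

lemma ex_bij_betw_fiberwise:
  assumes "finite A" "finite B"
    and card_eq: "\<And>v. card {a \<in> A. f a = v} = card {b \<in> B. g b = v}"
  shows "\<exists>\<beta>. bij_betw \<beta> A B \<and> (\<forall>a\<in>A. g (\<beta> a) = f a)"
proof -
  have "\<forall>v. \<exists>\<phi>. bij_betw \<phi> {a \<in> A. f a = v} {b \<in> B. g b = v}"
    using assms by (intro allI finite_same_card_bij) auto
  then obtain \<Phi> where \<Phi>: "\<And>v. bij_betw (\<Phi> v) {a \<in> A. f a = v} {b \<in> B. g b = v}"
    by metis
  define \<beta> where "\<beta> a = \<Phi> (f a) a" for a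
  have "g b \<in> f ` A" if "b \<in> B" for b
  proof -
    have "card {a \<in> A. f a = g b} \<noteq> 0"
      using card_eq[of "g b"] \<open>finite B\<close> that by auto
    then show ?thesis by (auto simp: card_eq_0_iff) (metis image_eqI)
  qed
  then have "A = (\<Union>v\<in>f ` A. {a \<in> A. f a = v})" and "B = (\<Union>v\<in>f ` A. {b \<in> B. g b = v})"
    by auto
  moreover have "bij_betw \<beta> (\<Union>v\<in>f ` A. {a \<in> A. f a = v}) (\<Union>v\<in>f ` A. {b \<in> B. g b = v})"
    by (rule bij_betw_UNION_disjoint)
      (auto simp: \<beta>_def disjoint_family_on_def intro: bij_betw_cong[THEN iffD1, OF _ \<Phi>])
  ultimately have "bij_betw \<beta> A B" by simp
  moreover have "g (\<beta> a) = f a" if "a \<in> A" for a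
    using bij_betw_apply[OF \<Phi>[of "f a"]] that unfolding \<beta>_def by auto
  ultimately show ?thesis by blast
qed

context group
begin

lemma wreath_conj_if_intertwined:
  assumes x: "x \<in> carrier (wreath G n)" and y: "y \<in> carrier (wreath G n)"
    and s: "s permutes {1..n}" and h: "\<And>p. p \<in> {1..n} \<Longrightarrow> h p \<in> carrier G"
    and succ: "\<And>p. p \<in> {1..n} \<Longrightarrow> s (wr_succ x p) = wr_succ y (s p)"
    and entry: "\<And>p. p \<in> {1..n} \<Longrightarrow> fst y (s p) \<otimes> h (wr_succ x p) = h p \<otimes> fst x p"
  shows "\<exists>u\<in>carrier (wreath G n). y = u \<otimes>\<^bsub>wreath G n\<^esub> x \<otimes>\<^bsub>wreath G n\<^esub> inv\<^bsub>wreath G n\<^esub> u"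
proof -
  let ?W = "wreath G n"
  define u where "u = ((\<lambda>i\<in>{1..n}. h (Hilbert_Choice.inv s i)), s)"
  have sx: "snd x permutes {1..n}" and sy: "snd y permutes {1..n}"
    using x y by (auto simp: wreath_carrier)
  have u: "u \<in> carrier ?W"
    unfolding u_def wreath_carrier using s h permutes_inv_in[OF s] by (auto simp: restrict_PiE_iff)
  have inv_s_succ: "Hilbert_Choice.inv s (wr_succ y i) = wr_succ x (Hilbert_Choice.inv s i)"
    if "i \<in> {1..n}" for i
    using succ[OF permutes_inv_in[OF s that]] permutes_inverses[OF s] by metis
  have "snd y \<circ> s = s \<circ> snd x"
  proof
    fix p show "(snd y \<circ> s) p = (s \<circ> snd x) p"
    proof (cases "p \<in> {1..n}")
      case True
      then have "s p = wr_succ y (s (snd x p))"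
        using succ[of "snd x p"] permutes_in_image[OF sx] permutes_inverses(2)[OF sx]
        unfolding wr_succ_def by metis
      then show ?thesis unfolding wr_succ_def using permutes_inverses(1)[OF sy] by simp
    qed (simp add: permutes_not_in[OF s] permutes_not_in[OF sx] permutes_not_in[OF sy])
  qed
  moreover have "fst y i \<otimes> h (Hilbert_Choice.inv s (wr_succ y i))
      = h (Hilbert_Choice.inv s i) \<otimes> fst x (Hilbert_Choice.inv s i)" if "i \<in> {1..n}" for i
    using entry[OF permutes_inv_in[OF s that]] inv_s_succ[OF that] permutes_inverses(1)[OF s] by simp
  ultimately have "y \<otimes>\<^bsub>?W\<^esub> u = u \<otimes>\<^bsub>?W\<^esub> x"
    using permutes_inv_in[OF sy] unfolding u_def wreath_mult
    by (auto simp: wr_succ_def intro!: ext)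
  then have "y = u \<otimes>\<^bsub>?W\<^esub> x \<otimes>\<^bsub>?W\<^esub> inv\<^bsub>?W\<^esub> u"
    using group.inv_solve_right[OF wreath_group y wreath_mult_closed[OF u x] u] by simp
  then show ?thesis using u by blast
qed

end

locale wr_cycle_matching = group +
  fixes n :: nat and x y :: "(nat \<Rightarrow> 'a) \<times> (nat \<Rightarrow> nat)"
    and \<beta> :: "nat \<Rightarrow> nat" and g :: "nat \<Rightarrow> 'a"
  assumes x: "x \<in> carrier (wreath G n)" and y: "y \<in> carrier (wreath G n)"
    and \<beta>: "bij_betw \<beta> (wr_cycle_reps n x) (wr_cycle_reps n y)"
    and len_\<beta>: "\<And>b. b \<in> wr_cycle_reps n x \<Longrightarrow> wr_cycle_len y (\<beta> b) = wr_cycle_len x b"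
    and g: "\<And>b. b \<in> wr_cycle_reps n x \<Longrightarrow> g b \<in> carrier G"
    and g_conj: "\<And>b. b \<in> wr_cycle_reps n x \<Longrightarrow>
      wr_cycle_prod G n y (\<beta> b) \<otimes> g b = g b \<otimes> wr_cycle_prod G n x b"
begin

abbreviation rep :: "nat \<Rightarrow> nat" where
  "rep \<equiv> orbit_rep (wr_succ x)"

abbreviation idx :: "nat \<Rightarrow> nat" where
  "idx p \<equiv> funpow_dist (wr_succ x) (rep p) p"

text \<open>The conjugator sends the \<open>j\<close>-th point of the cycle of \<open>x\<close> through \<open>b\<close> to the \<open>j\<close>-th point
  of the cycle of \<open>y\<close> through \<open>\<beta> b\<close>; its entries are the partial cycle products, twisted by \<open>g b\<close>.\<close>

definition conj_perm :: "nat \<Rightarrow> nat" where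
  "conj_perm p = (if p \<in> {1..n} then (wr_succ y ^^ idx p) (\<beta> (rep p)) else p)"

definition conj_entry :: "nat \<Rightarrow> 'a" where
  "conj_entry p = inv (fst (y [^]\<^bsub>wreath G n\<^esub> idx p) (\<beta> (rep p))) \<otimes> g (rep p)
    \<otimes> fst (x [^]\<^bsub>wreath G n\<^esub> idx p) (rep p)"

lemma reps_in: "b \<in> wr_cycle_reps n x \<Longrightarrow> b \<in> {1..n}"
  and reps_in': "b \<in> wr_cycle_reps n y \<Longrightarrow> b \<in> {1..n}"
  and rep_rep: "b \<in> wr_cycle_reps n x \<Longrightarrow> rep b = b"
  and rep_rep': "b \<in> wr_cycle_reps n y \<Longrightarrow> orbit_rep (wr_succ y) b = b"
  and \<beta>_in: "b \<in> wr_cycle_reps n x \<Longrightarrow> \<beta> b \<in> wr_cycle_reps n y"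
  unfolding wr_cycle_reps_def using bij_betw_apply[OF \<beta>] by (auto simp: wr_cycle_reps_def)

lemma rep_decomp:
  assumes p: "p \<in> {1..n}"
  shows "rep p \<in> wr_cycle_reps n x" "idx p < wr_cycle_len x (rep p)" "(wr_succ x ^^ idx p) (rep p) = p"
proof -
  have q: "permutation (wr_succ x)" using permutation_wr_succ[OF x] .
  show "rep p \<in> wr_cycle_reps n x"
    using permutes_orbit_subset[OF wr_succ_permutes[OF x] p] orbit_rep_in_orbit[OF q, of p]
      orbit_rep_idem[OF q] unfolding wr_cycle_reps_def by blast
  show "idx p < wr_cycle_len x (rep p)" "(wr_succ x ^^ idx p) (rep p) = p"
    using funpow_dist_orbit_rep[OF q] unfolding wr_cycle_len_def by auto
qed

lemma point_param:
  assumes b: "b \<in> wr_cycle_reps n x" and j: "j < wr_cycle_len x b"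
  shows "(wr_succ x ^^ j) b \<in> {1..n}" "rep ((wr_succ x ^^ j) b) = b" "idx ((wr_succ x ^^ j) b) = j"
proof -
  have q: "permutation (wr_succ x)" using permutation_wr_succ[OF x] .
  show "(wr_succ x ^^ j) b \<in> {1..n}"
    using permutes_in_funpow_image[OF wr_succ_permutes[OF x] reps_in[OF b]] .
  show "rep ((wr_succ x ^^ j) b) = b" using orbit_rep_funpow[OF q] rep_rep[OF b] by simp
  then show "idx ((wr_succ x ^^ j) b) = j"
    using funpow_dist_funpow[OF q] j unfolding wr_cycle_len_def by simp
qed

lemma conj_perm_funpow:
  assumes b: "b \<in> wr_cycle_reps n x"
  shows "conj_perm ((wr_succ x ^^ j) b) = (wr_succ y ^^ j) (\<beta> b)"
proof -
  let ?L = "wr_cycle_len x b"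
  have L: "0 < ?L" using wr_cycle_len_pos[OF x] .
  have "conj_perm ((wr_succ x ^^ j) b) = conj_perm ((wr_succ x ^^ (j mod ?L)) b)"
    using funpow_mod_eq[OF funpow_wr_cycle_len[OF x]] by simp
  also have "\<dots> = (wr_succ y ^^ (j mod ?L)) (\<beta> b)"
    using point_param[OF b, of "j mod ?L"] L unfolding conj_perm_def by simp
  also have "\<dots> = (wr_succ y ^^ j) (\<beta> b)"
    using funpow_mod_eq[OF funpow_wr_cycle_len[OF y, of "\<beta> b"]] len_\<beta>[OF b] by simp
  finally show ?thesis .
qed

lemma conj_perm_succ:
  assumes p: "p \<in> {1..n}"
  shows "conj_perm (wr_succ x p) = wr_succ y (conj_perm p)"
  using conj_perm_funpow[OF rep_decomp(1)[OF p], of "Suc (idx p)"]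
    conj_perm_funpow[OF rep_decomp(1)[OF p], of "idx p"] rep_decomp(3)[OF p] by simp

lemma conj_perm_permutes: "conj_perm permutes {1..n}"
proof -
  have qy: "permutation (wr_succ y)" using permutation_wr_succ[OF y] .
  have into: "conj_perm p \<in> {1..n}" if "p \<in> {1..n}" for p
    using that permutes_in_funpow_image[OF wr_succ_permutes[OF y] reps_in'[OF \<beta>_in[OF rep_decomp(1)]]]
    unfolding conj_perm_def by simp
  have "inj_on conj_perm {1..n}"
  proof (rule inj_onI)
    fix p1 p2 assume p: "p1 \<in> {1..n}" "p2 \<in> {1..n}" and eq: "conj_perm p1 = conj_perm p2"
    have b: "rep p1 \<in> wr_cycle_reps n x" "rep p2 \<in> wr_cycle_reps n x"
      using rep_decomp(1) p by auto
    have eq': "(wr_succ y ^^ idx p1) (\<beta> (rep p1)) = (wr_succ y ^^ idx p2) (\<beta> (rep p2))"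
      using eq p unfolding conj_perm_def by simp
    then have "\<beta> (rep p1) = \<beta> (rep p2)"
      using orbit_rep_funpow[OF qy] rep_rep'[OF \<beta>_in[OF b(1)]] rep_rep'[OF \<beta>_in[OF b(2)]] by metis
    then have same: "rep p1 = rep p2" using bij_betw_imp_inj_on[OF \<beta>] b by (auto dest: inj_onD)
    then have "idx p1 mod wr_cycle_len x (rep p1) = idx p2 mod wr_cycle_len x (rep p1)"
      using eq' funpow_eq_funpow_iff[OF qy] len_\<beta>[OF b(1)] unfolding wr_cycle_len_def by simp
    then show "p1 = p2" using rep_decomp[OF p(1)] rep_decomp[OF p(2)] same by (metis mod_less)
  qed
  moreover have "conj_perm ` {1..n} = {1..n}"
    using calculation into by (intro endo_inj_surj) auto
  ultimately show ?thesis
    by (intro bij_imp_permutes) (auto simp: bij_betw_def conj_perm_def)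
qed

lemma conj_entry_param:
  assumes b: "b \<in> wr_cycle_reps n x" and j: "j < wr_cycle_len x b"
  shows "conj_entry ((wr_succ x ^^ j) b)
    = inv (fst (y [^]\<^bsub>wreath G n\<^esub> j) (\<beta> b)) \<otimes> g b \<otimes> fst (x [^]\<^bsub>wreath G n\<^esub> j) b"
  using point_param[OF b j] unfolding conj_entry_def by simp

lemma conj_entry_closed: "p \<in> {1..n} \<Longrightarrow> conj_entry p \<in> carrier G"
  unfolding conj_entry_def
  using wreath_pow_fst_closed[OF y reps_in'[OF \<beta>_in[OF rep_decomp(1)]]]
    wreath_pow_fst_closed[OF x reps_in[OF rep_decomp(1)]] g[OF rep_decomp(1)] by simp

lemma conj_entry_succ:
  assumes p: "p \<in> {1..n}"
  shows "fst y (conj_perm p) \<otimes> conj_entry (wr_succ x p) = conj_entry p \<otimes> fst x p"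
proof -
  let ?b = "rep p" and ?j = "idx p" and ?L = "wr_cycle_len x (rep p)"
  have b: "?b \<in> wr_cycle_reps n x" and j: "?j < ?L" and pe: "(wr_succ x ^^ ?j) ?b = p"
    using rep_decomp[OF p] by auto
  have bI: "?b \<in> {1..n}" and bI': "\<beta> ?b \<in> {1..n}" using reps_in[OF b] reps_in'[OF \<beta>_in[OF b]] .
  have sp: "conj_perm p = (wr_succ y ^^ ?j) (\<beta> ?b)" using conj_perm_funpow[OF b, of ?j] pe by simp
  let ?a = "fst y (conj_perm p)" and ?A = "fst (y [^]\<^bsub>wreath G n\<^esub> ?j) (\<beta> ?b)"
    and ?B = "fst (x [^]\<^bsub>wreath G n\<^esub> ?j) ?b" and ?e = "fst x p"
  have mem: "?a \<in> carrier G" "?A \<in> carrier G" "g ?b \<in> carrier G" "?B \<in> carrier G" "?e \<in> carrier G"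
    using wreath_fst_closed[OF y permutes_in_image[OF conj_perm_permutes, THEN iffD2, OF p]]
      wreath_pow_fst_closed[OF y bI'] g[OF b] wreath_pow_fst_closed[OF x bI]
      wreath_fst_closed[OF x p] by auto
  have y_Suc: "fst (y [^]\<^bsub>wreath G n\<^esub> Suc ?j) (\<beta> ?b) = ?A \<otimes> ?a"
    using wreath_pow_fst_Suc[OF y bI', of ?j] sp by simp
  have x_Suc: "fst (x [^]\<^bsub>wreath G n\<^esub> Suc ?j) ?b = ?B \<otimes> ?e"
    using wreath_pow_fst_Suc[OF x bI, of ?j] pe by simp
  have next_p: "wr_succ x p = (wr_succ x ^^ Suc ?j) ?b" using pe by simp
  have e_p: "conj_entry p = inv ?A \<otimes> g ?b \<otimes> ?B" using conj_entry_param[OF b j] pe by simp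
  show ?thesis
  proof (cases "Suc ?j < ?L")
    case True
    then have "conj_entry (wr_succ x p) = inv (?A \<otimes> ?a) \<otimes> g ?b \<otimes> (?B \<otimes> ?e)"
      using conj_entry_param[OF b True] next_p x_Suc y_Suc by simp
    then show ?thesis using e_p mem by (simp add: inv_mult_group m_assoc mult_inv_cancel_left)
  next
    case False
    then have L: "Suc ?j = ?L" using j by simp
    then have "conj_entry (wr_succ x p) = g ?b"
      using conj_entry_param[OF b, of 0] wr_cycle_len_pos[OF x] next_p funpow_wr_cycle_len[OF x, of ?b]
        mem bI bI' by (simp add: wreath_one)
    moreover have "(?A \<otimes> ?a) \<otimes> g ?b = g ?b \<otimes> (?B \<otimes> ?e)"
      using g_conj[OF b] L len_\<beta>[OF b] x_Suc y_Suc unfolding wr_cycle_prod_def by simp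
    ultimately show ?thesis
      using e_p mem by (simp add: m_assoc inv_solve_left)
  qed
qed

lemma conj_exists: "\<exists>u\<in>carrier (wreath G n). y = u \<otimes>\<^bsub>wreath G n\<^esub> x \<otimes>\<^bsub>wreath G n\<^esub> inv\<^bsub>wreath G n\<^esub> u"
  using wreath_conj_if_intertwined[OF x y conj_perm_permutes conj_entry_closed conj_perm_succ
      conj_entry_succ] .

end

lemma (in group) ex_intertwiner_if_conj_class_eq:
  assumes x: "x \<in> carrier G" and y: "y \<in> carrier G" and eq: "conj_class G y = conj_class G x"
  shows "\<exists>h. h \<in> carrier G \<and> y \<otimes> h = h \<otimes> x"
proof -
  have "y \<in> conj_class G x" using conj_class_eq_iff[OF x y] eq by simp
  then obtain h where "h \<in> carrier G" "y = h \<otimes> x \<otimes> inv h"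
    unfolding conj_class_def by auto
  then show ?thesis using x by (intro exI[of _ h]) (simp add: m_assoc)
qed

lemma (in group) card_wr_cycle_reps_eq:
  assumes x: "x \<in> carrier (wreath G n)" and y: "y \<in> carrier (wreath G n)"
    and type_eq: "wr_type G n x = wr_type G n y"
  shows "card {b \<in> wr_cycle_reps n x. wr_label G n x b = v}
    = card {b \<in> wr_cycle_reps n y. wr_label G n y b = v}"
proof (cases "fst v = 0")
  case True
  have empty: "{b \<in> wr_cycle_reps n x. wr_label G n x b = v} = {}"
    "{b \<in> wr_cycle_reps n y. wr_label G n y b = v} = {}"
    using True wr_cycle_len_pos[OF x] wr_cycle_len_pos[OF y]
    by (auto simp: wr_label_def) (metis less_irrefl)+
  show ?thesis by (simp only: empty)
next
  case False
  then show ?thesis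
    using wr_type_eq[OF x, of "fst v" "snd v"] wr_type_eq[OF y, of "fst v" "snd v"] type_eq
    by simp
qed

lemma (in group) wreath_conj_if_wr_type_eq:
  assumes x: "x \<in> carrier (wreath G n)" and y: "y \<in> carrier (wreath G n)"
    and type_eq: "wr_type G n x = wr_type G n y"
  shows "\<exists>u\<in>carrier (wreath G n). y = u \<otimes>\<^bsub>wreath G n\<^esub> x \<otimes>\<^bsub>wreath G n\<^esub> inv\<^bsub>wreath G n\<^esub> u"
proof -
  have fin: "finite (wr_cycle_reps n x)" "finite (wr_cycle_reps n y)"
    unfolding wr_cycle_reps_def by simp_all
  obtain \<beta> where \<beta>: "bij_betw \<beta> (wr_cycle_reps n x) (wr_cycle_reps n y)"
    and label_\<beta>: "\<forall>b\<in>wr_cycle_reps n x. wr_label G n y (\<beta> b) = wr_label G n x b"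
    using ex_bij_betw_fiberwise[OF fin card_wr_cycle_reps_eq[OF x y type_eq]] by auto
  have "\<forall>b\<in>wr_cycle_reps n x.
      \<exists>h. h \<in> carrier G \<and> wr_cycle_prod G n y (\<beta> b) \<otimes> h = h \<otimes> wr_cycle_prod G n x b"
  proof
    fix b assume b: "b \<in> wr_cycle_reps n x"
    have "b \<in> {1..n}" and "\<beta> b \<in> {1..n}"
      using b bij_betw_apply[OF \<beta> b] unfolding wr_cycle_reps_def by auto
    then show "\<exists>h. h \<in> carrier G \<and> wr_cycle_prod G n y (\<beta> b) \<otimes> h = h \<otimes> wr_cycle_prod G n x b"
      using ex_intertwiner_if_conj_class_eq wr_cycle_prod_closed[OF x] wr_cycle_prod_closed[OF y]
        label_\<beta> b unfolding wr_label_def by simp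
  qed
  from bchoice[OF this] obtain g where "\<forall>b\<in>wr_cycle_reps n x.
      g b \<in> carrier G \<and> wr_cycle_prod G n y (\<beta> b) \<otimes> g b = g b \<otimes> wr_cycle_prod G n x b"
    by auto
  moreover have "\<forall>b\<in>wr_cycle_reps n x. wr_cycle_len y (\<beta> b) = wr_cycle_len x b"
    using label_\<beta> unfolding wr_label_def by simp
  ultimately interpret wr_cycle_matching G n x y \<beta> g
    using x y \<beta> by unfold_locales auto
  show ?thesis by (rule conj_exists)
qed

section \<open>Cycles of r-th powers\<close>

text \<open>The label of \<open>z\<^sup>r\<close> at a point with label \<open>(L, C)\<close> of \<open>z\<close>: the cycle splits into \<open>r\<close> cycles of
  length \<open>L div r\<close> with the same cycle product if \<open>r\<close> divides \<open>L\<close>; otherwise (\<open>r\<close> prime) it stays one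
  cycle and its cycle product is raised to the \<open>r\<close>-th power.\<close>

definition rth_power_label :: "('a, 'b) monoid_scheme \<Rightarrow> nat \<Rightarrow> nat \<times> 'a set \<Rightarrow> nat \<times> 'a set" where
  "rth_power_label G r v =
    (if r dvd fst v then (fst v div r, snd v) else (fst v, (\<lambda>y. y [^]\<^bsub>G\<^esub> r) ` snd v))"

definition rth_power_type :: "('a, 'b) monoid_scheme \<Rightarrow> nat \<Rightarrow> (nat \<times> 'a set \<Rightarrow> nat) \<Rightarrow> bool" where
  "rth_power_type G r T \<longleftrightarrow>
    (\<forall>k C. \<not> is_rth_power_class G r C \<or> r dvd k \<longrightarrow> r * k dvd T (k, C))"

context group
begin

lemma wr_label_pow:
  assumes z: "z \<in> carrier (wreath G n)" and i: "i \<in> {1..n}" and r: "prime r"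
  shows "wr_label G n (z [^]\<^bsub>wreath G n\<^esub> r) i = rth_power_label G r (wr_label G n z i)"
proof -
  let ?x = "z [^]\<^bsub>wreath G n\<^esub> r" and ?L = "wr_cycle_len z i"
  have L: "0 < ?L" using wr_cycle_len_pos[OF z] .
  have "((wr_succ z ^^ r) ^^ k) i = i \<longleftrightarrow> ?L dvd r * k" for k
    unfolding funpow_mult wr_cycle_len_def
    using funpow_eq_self_iff_period_dvd[OF permutation_wr_succ[OF z]] by simp
  then have len: "wr_cycle_len ?x i = (LEAST k. 0 < k \<and> ?L dvd r * k)"
    unfolding wr_cycle_len_def period_def wr_succ_pow[OF z] by simp
  have pow_pow: "?x [^]\<^bsub>wreath G n\<^esub> m = z [^]\<^bsub>wreath G n\<^esub> (r * m)" for m :: nat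
    using monoid.nat_pow_pow[OF wreath_monoid z] by simp
  have least: "(LEAST k. 0 < k \<and> M dvd k) = M" if "0 < M" for M :: nat
    using that by (intro Least_equality) (auto dest: dvd_imp_le)
  show ?thesis
  proof (cases "r dvd ?L")
    case True
    then obtain L' where L': "?L = r * L'" by (elim dvdE)
    then have "0 < L'" using L by (cases L') auto
    moreover have "?L dvd r * k \<longleftrightarrow> L' dvd k" for k
      using L' prime_gt_0_nat[OF r] by simp
    ultimately have "wr_cycle_len ?x i = L'" using len least by simp
    then show ?thesis
      unfolding wr_label_def rth_power_label_def wr_cycle_prod_def
      using True L' pow_pow prime_gt_0_nat[OF r] by simp
  next
    case False
    then have "coprime ?L r"
      using r by (metis coprime_commute prime_imp_coprime_nat)
    then have "?L dvd r * k \<longleftrightarrow> ?L dvd k" for k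
      by (metis coprime_dvd_mult_right_iff mult.commute)
    then have l: "wr_cycle_len ?x i = ?L" using len least[OF L] by simp
    have "wr_cycle_prod G n ?x i = wr_cycle_prod G n z i [^] r"
      unfolding wr_cycle_prod_def l pow_pow
      using wreath_pow_cycle_len_mult[OF z i, of r] unfolding wr_cycle_prod_def
      by (simp add: mult.commute)
    then show ?thesis
      unfolding wr_label_def rth_power_label_def
      using False l conj_class_nat_pow[OF wr_cycle_prod_closed[OF z i]] by simp
  qed
qed

lemma rth_power_label_eq_iff:
  assumes z: "z \<in> carrier (wreath G n)" and i: "i \<in> {1..n}" and r: "prime r"
    and cond: "\<not> is_rth_power_class G r C \<or> r dvd k"
  shows "rth_power_label G r (wr_label G n z i) = (k, C) \<longleftrightarrow> wr_label G n z i = (r * k, C)"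
proof -
  obtain L D where LD: "wr_label G n z i = (L, D)" by (cases "wr_label G n z i")
  have D: "D = conj_class G (wr_cycle_prod G n z i)" using LD unfolding wr_label_def by simp
  have "is_rth_power_class G r ((\<lambda>y. y [^] r) ` D)"
    unfolding is_rth_power_class_def D using conj_class_subset[OF wr_cycle_prod_closed[OF z i]] by auto
  then show ?thesis
    using cond prime_gt_0_nat[OF r] unfolding LD rth_power_label_def by auto
qed

lemma rth_power_type_wr_type_pow:
  assumes z: "z \<in> carrier (wreath G n)" and r: "prime r"
  shows "rth_power_type G r (wr_type G n (z [^]\<^bsub>wreath G n\<^esub> r))"
  unfolding rth_power_type_def
proof (intro allI impI)
  fix k C assume cond: "\<not> is_rth_power_class G r C \<or> r dvd k"
  have "{i \<in> {1..n}. wr_label G n (z [^]\<^bsub>wreath G n\<^esub> r) i = (k, C)}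
      = {i \<in> {1..n}. wr_label G n z i = (r * k, C)}"
    using wr_label_pow[OF z _ r] rth_power_label_eq_iff[OF z _ r cond] prime_gt_0_nat[OF r]
    by (auto simp: rth_power_label_def)
  then have "wr_type G n (z [^]\<^bsub>wreath G n\<^esub> r) (k, C) = wr_type G n z (r * k, C)"
    unfolding wr_type_def by simp
  then show "r * k dvd wr_type G n (z [^]\<^bsub>wreath G n\<^esub> r) (k, C)"
    using wr_type_eq[OF z] by simp
qed

end

section \<open>Realising types\<close>

definition block_cycle :: "nat \<Rightarrow> nat \<Rightarrow> nat \<Rightarrow> nat" where
  "block_cycle m L i = (if i \<in> {m+1..m+L} then (if i = m + L then m + 1 else i + 1) else i)"

lemma block_cycle_permutes:
  assumes L: "0 < L"
  shows "block_cycle m L permutes {m+1..m+L}"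
proof (rule bij_imp_permutes)
  have "inj_on (block_cycle m L) {m+1..m+L}"
    by (rule inj_onI) (auto simp: block_cycle_def split: if_splits)
  moreover have "block_cycle m L ` {m+1..m+L} \<subseteq> {m+1..m+L}"
    using L by (auto simp: block_cycle_def)
  ultimately show "bij_betw (block_cycle m L) {m+1..m+L} {m+1..m+L}"
    unfolding bij_betw_def by (simp add: endo_inj_surj)
qed (auto simp: block_cycle_def)

lemma block_cycle_funpow:
  assumes L: "0 < L"
  shows "(block_cycle m L ^^ j) (m + 1) = m + 1 + j mod L"
proof (induct j)
  case (Suc j)
  have "j mod L < L" using L by simp
  then consider "Suc (j mod L) = L" | "Suc (j mod L) < L" by linarith
  then show ?case
    using Suc L by cases (auto simp: block_cycle_def mod_Suc)
qed simp

definition wr_extend ::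
    "('a, 'b) monoid_scheme \<Rightarrow> nat \<Rightarrow> nat \<Rightarrow> 'a \<Rightarrow> (nat \<Rightarrow> 'a) \<times> (nat \<Rightarrow> nat)
      \<Rightarrow> (nat \<Rightarrow> 'a) \<times> (nat \<Rightarrow> nat)" where
  "wr_extend G m L c x =
    ((\<lambda>i\<in>{1..m+L}. if i \<le> m then fst x i else if i = m + 1 then c else \<one>\<^bsub>G\<^esub>),
     snd x \<circ> Hilbert_Choice.inv (block_cycle m L))"

context group
begin

lemma wr_extend_carrier:
  assumes x: "x \<in> carrier (wreath G m)" and L: "0 < L" and c: "c \<in> carrier G"
  shows "wr_extend G m L c x \<in> carrier (wreath G (m + L))"
proof -
  have "Hilbert_Choice.inv (block_cycle m L) permutes {1..m+L}"
    using permutes_subset[OF permutes_inv[OF block_cycle_permutes[OF L]]] by auto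
  moreover have "snd x permutes {1..m+L}"
    using permutes_subset[of "snd x" "{1..m}"] x by (auto simp: wreath_carrier)
  ultimately show ?thesis
    using c wreath_fst_closed[OF x]
    by (auto simp: wr_extend_def wreath_carrier restrict_PiE_iff permutes_compose)
qed

lemma wr_succ_wr_extend:
  assumes x: "x \<in> carrier (wreath G m)" and L: "0 < L"
  shows "wr_succ (wr_extend G m L c x) = block_cycle m L \<circ> wr_succ x"
proof -
  have "bij (snd x)" "bij (Hilbert_Choice.inv (block_cycle m L))" "bij (block_cycle m L)"
    using x permutes_bij[OF block_cycle_permutes[OF L]] by (auto simp: wreath_carrier permutes_bij bij_imp_bij_inv)
  then show ?thesis
    unfolding wr_succ_def wr_extend_def by (simp add: o_inv_distrib inv_inv_eq)
qed

lemma wr_label_wr_extend_old: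
  assumes x: "x \<in> carrier (wreath G m)" and L: "0 < L" and c: "c \<in> carrier G"
    and i: "i \<in> {1..m}"
  shows "wr_label G (m + L) (wr_extend G m L c x) i = wr_label G m x i"
proof -
  let ?X = "wr_extend G m L c x"
  have X: "?X \<in> carrier (wreath G (m + L))" using wr_extend_carrier[OF x L c] .
  have succ: "(wr_succ ?X ^^ k) i = (wr_succ x ^^ k) i \<and> (wr_succ x ^^ k) i \<in> {1..m}" for k
  proof (induct k)
    case (Suc k)
    have "wr_succ x ((wr_succ x ^^ k) i) \<in> {1..m}"
      using Suc wr_succ_in[OF x] by blast
    moreover from this have "block_cycle m L (wr_succ x ((wr_succ x ^^ k) i)) = wr_succ x ((wr_succ x ^^ k) i)"
      by (simp add: block_cycle_def)
    ultimately show ?case using Suc by (simp add: wr_succ_wr_extend[OF x L])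
  qed (use i in simp)
  then have len: "wr_cycle_len ?X i = wr_cycle_len x i"
    unfolding wr_cycle_len_def period_def by simp
  have "fst (?X [^]\<^bsub>wreath G (m + L)\<^esub> k) i = fst (x [^]\<^bsub>wreath G m\<^esub> k) i" for k :: nat
  proof (induct k)
    case (Suc k)
    have "fst ?X ((wr_succ ?X ^^ k) i) = fst x ((wr_succ x ^^ k) i)"
      using succ[of k] by (auto simp: wr_extend_def)
    then show ?case
      using wreath_pow_fst_Suc[OF X, of i k] wreath_pow_fst_Suc[OF x i, of k] Suc i by simp
  qed (use i in \<open>simp add: wreath_one\<close>)
  then show ?thesis unfolding wr_label_def wr_cycle_prod_def len by simp
qed

lemma wr_succ_wr_extend_funpow:
  assumes x: "x \<in> carrier (wreath G m)" and L: "0 < L"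
  shows "(wr_succ (wr_extend G m L c x) ^^ j) (m + 1) = m + 1 + j mod L"
proof (induct j)
  case (Suc j)
  have "m + 1 + j mod L \<in> {m+1..m+L}"
    using mod_less_divisor[OF L, of j] by simp
  moreover have "wr_succ x i = i" if "i \<in> {m+1..m+L}" for i
    using permutes_not_in[OF wr_succ_permutes[OF x]] that by simp
  ultimately show ?case
    using Suc block_cycle_funpow[OF L, where m=m and j="Suc j"] block_cycle_funpow[OF L, where m=m and j=j]
    by (simp add: wr_succ_wr_extend[OF x L])
qed simp

lemma wr_label_wr_extend_new:
  assumes x: "x \<in> carrier (wreath G m)" and L: "0 < L" and c: "c \<in> carrier G"
    and i: "i \<in> {m+1..m+L}"
  shows "wr_label G (m + L) (wr_extend G m L c x) i = (L, conj_class G c)"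
proof -
  let ?X = "wr_extend G m L c x"
  have X: "?X \<in> carrier (wreath G (m + L))" using wr_extend_carrier[OF x L c] .
  note orb = wr_succ_wr_extend_funpow[OF x L, where c=c]
  have start: "m + 1 \<in> {1..m + L}" using L by simp
  have len: "wr_cycle_len ?X (m + 1) = L"
    unfolding wr_cycle_len_def period_def orb using L
    by (intro Least_equality) (auto simp: dvd_eq_mod_eq_0[symmetric] dest: dvd_imp_le)
  have "fst (?X [^]\<^bsub>wreath G (m + L)\<^esub> k) (m + 1) = c" if "0 < k" "k \<le> L" for k :: nat
    using that
  proof (induct k)
    case (Suc k)
    show ?case
    proof (cases "k = 0")
      case True
      then show ?thesis using wreath_pow_1[OF X] L by (simp add: wr_extend_def One_nat_def)
    next
      case False
      then have "fst ?X ((wr_succ ?X ^^ k) (m + 1)) = \<one>"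
        using Suc.prems unfolding orb by (simp add: wr_extend_def)
      then show ?thesis using wreath_pow_fst_Suc[OF X start, of k] Suc False c by simp
    qed
  qed simp
  then have "wr_label G (m + L) ?X (m + 1) = (L, conj_class G c)"
    unfolding wr_label_def wr_cycle_prod_def len using L by simp
  moreover have "(wr_succ ?X ^^ (i - (m + 1))) (m + 1) = i" unfolding orb using i by auto
  then have "wr_label G (m + L) ?X i = wr_label G (m + L) ?X (m + 1)"
    using wr_label_funpow[OF X start, of "i - (m + 1)"] by simp
  ultimately show ?thesis by simp
qed

lemma wr_extend_label_count:
  assumes x: "x \<in> carrier (wreath G m)" and L: "0 < L" and c: "c \<in> carrier G"
  shows "card {i \<in> {1..m+L}. \<Psi> (wr_label G (m + L) (wr_extend G m L c x) i) = v}
    = card {i \<in> {1..m}. \<Psi> (wr_label G m x i) = v} + (if \<Psi> (L, conj_class G c) = v then L else 0)"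
proof -
  let ?X = "wr_extend G m L c x"
  have "{i \<in> {1..m+L}. \<Psi> (wr_label G (m + L) ?X i) = v}
      = {i \<in> {1..m}. \<Psi> (wr_label G (m + L) ?X i) = v} \<union> {i \<in> {m+1..m+L}. \<Psi> (wr_label G (m + L) ?X i) = v}"
    by auto
  moreover have "{i \<in> {1..m}. \<Psi> (wr_label G (m + L) ?X i) = v} = {i \<in> {1..m}. \<Psi> (wr_label G m x i) = v}"
    using wr_label_wr_extend_old[OF x L c] by auto
  moreover have "{i \<in> {m+1..m+L}. \<Psi> (wr_label G (m + L) ?X i) = v}
      = (if \<Psi> (L, conj_class G c) = v then {m+1..m+L} else {})"
    using wr_label_wr_extend_new[OF x L c] by auto
  moreover have "{i \<in> {1..m}. \<Psi> (wr_label G m x i) = v} \<inter> {m+1..m+L} = {}" by auto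
  ultimately show ?thesis by (simp add: card_Un_disjoint)
qed

text \<open>\<open>\<Psi>\<close> is the identity for types and \<open>rth_power_label G r\<close> for types of \<open>r\<close>-th powers.\<close>

lemma wr_label_count_realizable:
  fixes \<Psi> :: "nat \<times> 'a set \<Rightarrow> 'v" and Good :: "nat \<Rightarrow> ('v \<Rightarrow> nat) set"
  assumes base: "\<And>T. T \<in> Good 0 \<Longrightarrow> T = (\<lambda>v. 0)"
    and step: "\<And>n T. 0 < n \<Longrightarrow> T \<in> Good n \<Longrightarrow> \<exists>L c T'. 0 < L \<and> L \<le> n \<and> c \<in> carrier G \<and>
        T' \<in> Good (n - L) \<and> (\<forall>v. T v = T' v + (if \<Psi> (L, conj_class G c) = v then L else 0))"
  shows "T \<in> Good n \<Longrightarrow> \<exists>z\<in>carrier (wreath G n). \<forall>v. card {i \<in> {1..n}. \<Psi> (wr_label G n z i) = v} = T v"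
proof (induct n arbitrary: T rule: less_induct)
  case (less n)
  show ?case
  proof (cases "n = 0")
    case True
    then show ?thesis
      using base[OF less.prems[unfolded True]] monoid.one_closed[OF wreath_monoid, of 0]
      by (intro bexI[of _ "\<one>\<^bsub>wreath G 0\<^esub>"]) auto
  next
    case False
    then obtain L c T' where L: "0 < L" "L \<le> n" and c: "c \<in> carrier G" and T': "T' \<in> Good (n - L)"
      and T: "\<forall>v. T v = T' v + (if \<Psi> (L, conj_class G c) = v then L else 0)"
      using step[OF _ less.prems] False by auto
    obtain z where z: "z \<in> carrier (wreath G (n - L))"
      and count: "\<forall>v. card {i \<in> {1..n - L}. \<Psi> (wr_label G (n - L) z i) = v} = T' v"
      using less.hyps[of "n - L" T'] L T' by auto
    let ?Z = "wr_extend G (n - L) L c z"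
    have nL: "n - L + L = n" using L by simp
    have "card {i \<in> {1..n}. \<Psi> (wr_label G n ?Z i) = v} = T v" for v
      using wr_extend_label_count[OF z L(1) c, of \<Psi> v] count T unfolding nL by simp
    moreover have "?Z \<in> carrier (wreath G n)" using wr_extend_carrier[OF z L(1) c] unfolding nL .
    ultimately show ?thesis by (intro bexI[of _ ?Z]) auto
  qed
qed

end

definition wr_types :: "('a, 'b) monoid_scheme \<Rightarrow> nat \<Rightarrow> (nat \<times> 'a set \<Rightarrow> nat) set" where
  "wr_types G n = {T. (\<forall>k C. T (k, C) \<noteq> 0 \<longrightarrow> 1 \<le> k \<and> k \<le> n \<and> C \<in> conj_classes G)
      \<and> (\<forall>k C. k dvd T (k, C)) \<and> (\<Sum>v \<in> {1..n} \<times> conj_classes G. T v) = n}"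

lemma sum_card_fibers:
  assumes "finite V" "finite I" "f ` I \<subseteq> V"
  shows "(\<Sum>v\<in>V. card {i \<in> I. f i = v}) = card I"
proof -
  have "I = (\<Union>v\<in>V. {i \<in> I. f i = v})" using assms(3) by auto
  moreover have "card (\<Union>v\<in>V. {i \<in> I. f i = v}) = (\<Sum>v\<in>V. card {i \<in> I. f i = v})"
    using assms(1,2) by (intro card_UN_disjoint) auto
  ultimately show ?thesis by simp
qed

lemma sum_fun_upd_minus:
  fixes T :: "'v \<Rightarrow> nat"
  assumes "finite V" "v \<in> V" "L \<le> T v"
  shows "(\<Sum>w\<in>V. (T(v := T v - L)) w) = (\<Sum>w\<in>V. T w) - L"
  using assms by (simp add: sum.remove)

lemma wr_types_le:
  assumes fin: "finite (conj_classes G)" and T: "T \<in> wr_types G n"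
  shows "T w \<le> n"
proof (cases "T w = 0")
  case False
  then have "w \<in> {1..n} \<times> conj_classes G"
    using T unfolding wr_types_def by (cases w) auto
  then have "T w \<le> (\<Sum>v \<in> {1..n} \<times> conj_classes G. T v)"
    using fin by (intro member_le_sum) auto
  then show ?thesis using T unfolding wr_types_def by simp
qed simp

lemma wr_types_remove:
  assumes fin: "finite (conj_classes G)" and T: "T \<in> wr_types G n"
    and nz: "T (k, C) \<noteq> 0" and L: "L \<le> T (k, C)" and "k dvd L"
  shows "T((k, C) := T (k, C) - L) \<in> wr_types G (n - L)" and "L \<le> n"
proof -
  let ?V = "{1..n} \<times> conj_classes G" and ?T = "T((k, C) := T (k, C) - L)"
  have kC: "(k, C) \<in> ?V" using T nz unfolding wr_types_def by auto
  show "L \<le> n" using L wr_types_le[OF fin T, of "(k, C)"] by simp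
  have sum: "(\<Sum>w\<in>?V. ?T w) = n - L"
    using sum_fun_upd_minus[of ?V "(k, C)" L T] kC L fin T unfolding wr_types_def by simp
  have dvd: "k' dvd ?T (k', C')" for k' C'
    using T \<open>k dvd L\<close> unfolding wr_types_def by (auto intro: dvd_diff_nat)
  have supp: "1 \<le> k' \<and> k' \<le> n - L \<and> C' \<in> conj_classes G" if nz': "?T (k', C') \<noteq> 0" for k' C'
  proof -
    have T0: "T (k', C') \<noteq> 0"
    proof
      assume "T (k', C') = 0"
      then show False using nz' by (cases "(k', C') = (k, C)") (auto simp del: prod.inject)
    qed
    then have "(k', C') \<in> ?V" using T unfolding wr_types_def by auto
    then have "?T (k', C') \<le> n - L"
      using fin sum member_le_sum[of "(k', C')" ?V ?T] by auto
    moreover have "k' \<le> ?T (k', C')" using dvd[of k' C'] nz' by (simp add: dvd_imp_le)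
    ultimately show ?thesis using T T0 unfolding wr_types_def by auto
  qed
  have "(\<Sum>w \<in> {1..n - L} \<times> conj_classes G. ?T w) = (\<Sum>w\<in>?V. ?T w)"
    using fin supp by (intro sum.mono_neutral_left) fastforce+
  then show "?T \<in> wr_types G (n - L)"
    unfolding wr_types_def using supp dvd sum by simp
qed

lemma wr_types_nonzero:
  assumes T: "T \<in> wr_types G n" and n: "0 < n"
  obtains k C where "T (k, C) \<noteq> 0"
proof (rule ccontr)
  assume "\<not> thesis"
  then have "(\<Sum>v \<in> {1..n} \<times> conj_classes G. T v) = 0" using that by (auto intro: sum.neutral)
  then show False using T n unfolding wr_types_def by simp
qed

lemma wr_types_0: "T \<in> wr_types G 0 \<Longrightarrow> T = (\<lambda>v. 0)"
  unfolding wr_types_def by fastforce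

context group
begin

lemma wr_type_in_wr_types:
  assumes fin: "finite (carrier G)" and x: "x \<in> carrier (wreath G n)"
  shows "wr_type G n x \<in> wr_types G n"
proof -
  let ?V = "{1..n} \<times> conj_classes G"
  have label_in: "wr_label G n x i \<in> ?V" if "i \<in> {1..n}" for i
    using wr_cycle_len_pos[OF x, of i] wr_cycle_len_le[OF x that]
      conj_class_in_conj_classes[OF wr_cycle_prod_closed[OF x that]]
    unfolding wr_label_def by auto
  have "1 \<le> k \<and> k \<le> n \<and> C \<in> conj_classes G" if nz: "wr_type G n x (k, C) \<noteq> 0" for k C
  proof -
    obtain i where "i \<in> {1..n}" "wr_label G n x i = (k, C)"
      using nz unfolding wr_type_def by (metis (mono_tags, lifting) Collect_empty_eq card.empty)
    then show ?thesis using label_in by force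
  qed
  moreover have "(\<Sum>v\<in>?V. wr_type G n x v) = n"
    unfolding wr_type_def using finite_conj_classes[OF fin]
    by (subst sum_card_fibers[OF _ _ image_subsetI[OF label_in]]) auto
  moreover have "k dvd wr_type G n x (k, C)" for k C
    using wr_type_eq[OF x] by simp
  ultimately show ?thesis
    unfolding wr_types_def by auto
qed

lemma wr_types_split_cycle:
  assumes fin: "finite (carrier G)" and m: "0 < m" and T: "T \<in> wr_types G m"
  shows "\<exists>L c T'. 0 < L \<and> L \<le> m \<and> c \<in> carrier G \<and> T' \<in> wr_types G (m - L) \<and>
    (\<forall>v. T v = T' v + (if id (L, conj_class G c) = v then L else 0))"
proof -
  obtain k C where nz: "T (k, C) \<noteq> 0" using wr_types_nonzero[OF T m] .
  then have "C \<in> conj_classes G" "1 \<le> k" "k dvd T (k, C)"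
    using T unfolding wr_types_def by auto
  moreover obtain c where "c \<in> carrier G" "C = conj_class G c"
    using calculation(1) unfolding conj_classes_def by auto
  moreover have "k \<le> T (k, C)" using nz calculation(3) by (simp add: dvd_imp_le)
  ultimately show ?thesis
    using wr_types_remove[OF finite_conj_classes[OF fin] T nz _ dvd_refl]
    by (intro exI[of _ k] exI[of _ c] exI[of _ "T((k, C) := T (k, C) - k)"]) auto
qed

lemma wr_types_realized:
  assumes fin: "finite (carrier G)" and T: "T \<in> wr_types G n"
  shows "\<exists>x\<in>carrier (wreath G n). wr_type G n x = T"
proof -
  have base: "\<And>T. T \<in> wr_types G 0 \<Longrightarrow> T = (\<lambda>v. 0)" by (rule wr_types_0)
  from wr_label_count_realizable[where \<Psi>=id and Good="wr_types G",
      OF base wr_types_split_cycle[OF fin] T]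
  obtain x where "x \<in> carrier (wreath G n)"
    and "\<forall>v. card {i \<in> {1..n}. id (wr_label G n x i) = v} = T v" ..
  moreover from this(2) have "wr_type G n x = T" unfolding wr_type_def by auto
  ultimately show ?thesis by (intro bexI[of _ x])
qed

text \<open>Removing a cycle of \<open>z\<close> changes the type of \<open>z\<^sup>r\<close> by \<open>r k\<close> points of label \<open>(k, C)\<close> when the
  cycle splits, and by \<open>k\<close> points when it does not, which needs \<open>C\<close> to be an \<open>r\<close>-th power class.\<close>

lemma rth_power_types_split_cycle:
  assumes fin: "finite (carrier G)" and r: "prime r"
    and m: "0 < m" and T_rth: "T \<in> {T \<in> wr_types G m. rth_power_type G r T}"
  shows "\<exists>L c T'. 0 < L \<and> L \<le> m \<and> c \<in> carrier G \<and> T' \<in> {T \<in> wr_types G (m - L). rth_power_type G r T}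
    \<and> (\<forall>v. T v = T' v + (if rth_power_label G r (L, conj_class G c) = v then L else 0))"
proof -
  have T: "T \<in> wr_types G m" and rth: "rth_power_type G r T" using T_rth by auto
  obtain k C where nz: "T (k, C) \<noteq> 0" using wr_types_nonzero[OF T m] .
  then have C: "C \<in> conj_classes G" and k: "1 \<le> k" and kdvd: "k dvd T (k, C)"
    using T unfolding wr_types_def by auto
  obtain c where c: "c \<in> carrier G" "C = conj_class G c"
    using C unfolding conj_classes_def by auto
  show ?thesis
  proof (cases "\<not> is_rth_power_class G r C \<or> r dvd k")
    case True
    then have rk: "r * k dvd T (k, C)" using rth unfolding rth_power_type_def by simp
    then have "r * k \<le> T (k, C)" using nz by (simp add: dvd_imp_le)
    moreover have "rth_power_label G r (r * k, conj_class G c) = (k, C)"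
      unfolding rth_power_label_def using c prime_gt_0_nat[OF r] by simp
    moreover have "rth_power_type G r (T((k, C) := T (k, C) - r * k))"
      using rth rk unfolding rth_power_type_def by (auto intro: dvd_diff_nat)
    ultimately show ?thesis
      using wr_types_remove[OF finite_conj_classes[OF fin] T nz, of "r * k"] c k prime_gt_0_nat[OF r]
      by (intro exI[of _ "r * k"] exI[of _ c] exI[of _ "T((k, C) := T (k, C) - r * k)"]) auto
  next
    case False
    then have rth_C: "is_rth_power_class G r C" and nd: "\<not> r dvd k" by auto
    obtain w where w: "w \<in> carrier G" "c = w [^] r"
      using rth_C conj_class_self[OF c(1)] c(2) unfolding is_rth_power_class_def by auto
    have "k \<le> T (k, C)" using nz kdvd by (simp add: dvd_imp_le)
    moreover have "rth_power_label G r (k, conj_class G w) = (k, C)"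
      unfolding rth_power_label_def using nd c w conj_class_nat_pow[OF w(1), of r] by simp
    moreover have "rth_power_type G r (T((k, C) := T (k, C) - k))"
      using rth False unfolding rth_power_type_def by auto
    ultimately show ?thesis
      using wr_types_remove[OF finite_conj_classes[OF fin] T nz _ dvd_refl] w k
      by (intro exI[of _ k] exI[of _ w] exI[of _ "T((k, C) := T (k, C) - k)"]) auto
  qed
qed

lemma rth_power_types_realized:
  assumes fin: "finite (carrier G)" and r: "prime r"
    and T: "T \<in> wr_types G n" and rth: "rth_power_type G r T"
  shows "\<exists>z\<in>carrier (wreath G n). wr_type G n (z [^]\<^bsub>wreath G n\<^esub> r) = T"
proof -
  let ?Good = "\<lambda>m. {T \<in> wr_types G m. rth_power_type G r T}"
  have base: "\<And>T. T \<in> ?Good 0 \<Longrightarrow> T = (\<lambda>v. 0)" using wr_types_0 by blast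
  have "T \<in> ?Good n" using T rth by simp
  from wr_label_count_realizable[where \<Psi>="rth_power_label G r" and Good="?Good",
      OF base rth_power_types_split_cycle[OF fin r] this]
  obtain z where z: "z \<in> carrier (wreath G n)"
    and count: "\<forall>v. card {i \<in> {1..n}. rth_power_label G r (wr_label G n z i) = v} = T v"
    ..
  have "wr_type G n (z [^]\<^bsub>wreath G n\<^esub> r) v
      = card {i \<in> {1..n}. rth_power_label G r (wr_label G n z i) = v}" for v
    unfolding wr_type_def using wr_label_pow[OF z _ r] by (intro arg_cong[where f=card]) auto
  then have "wr_type G n (z [^]\<^bsub>wreath G n\<^esub> r) v = T v" for v
    using count[rule_format, of v] by (simp only:)
  then show ?thesis using z by (intro bexI[of _ z] ext)
qed

end

context group
begin

lemma is_rth_power_class_conj_class_iff: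
  assumes x: "x \<in> carrier G"
  shows "is_rth_power_class G r (conj_class G x) \<longleftrightarrow> (\<exists>w\<in>carrier G. x = w [^] r)"
proof
  assume "\<exists>w\<in>carrier G. x = w [^] r"
  then obtain w where w: "w \<in> carrier G" "x = w [^] r" by auto
  show "is_rth_power_class G r (conj_class G x)"
    unfolding is_rth_power_class_def
  proof
    fix y assume "y \<in> conj_class G x"
    then obtain g where g: "g \<in> carrier G" "y = g \<otimes> x \<otimes> inv g" unfolding conj_class_def by auto
    then have "y = (g \<otimes> w \<otimes> inv g) [^] r" using w conj_nat_pow[OF g(1) w(1)] by simp
    then show "\<exists>z\<in>carrier G. y = z [^] r" using g w by auto
  qed
qed (use conj_class_self[OF x] in \<open>auto simp: is_rth_power_class_def\<close>)

lemma wr_type_conj_class: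
  assumes x: "x \<in> carrier (wreath G n)"
  shows "wr_type G n ` conj_class (wreath G n) x = {wr_type G n x}"
  using wr_type_conj[OF x] group.conj_class_self[OF wreath_group x] unfolding conj_class_def by auto

lemma is_rth_power_class_iff_wr_type:
  assumes fin: "finite (carrier G)" and r: "prime r" and x: "x \<in> carrier (wreath G n)"
  shows "is_rth_power_class (wreath G n) r (conj_class (wreath G n) x)
    \<longleftrightarrow> rth_power_type G r (wr_type G n x)"
  unfolding group.is_rth_power_class_conj_class_iff[OF wreath_group x]
proof
  assume "\<exists>w\<in>carrier (wreath G n). x = w [^]\<^bsub>wreath G n\<^esub> r"
  then show "rth_power_type G r (wr_type G n x)"
    using rth_power_type_wr_type_pow[OF _ r] by auto
next
  let ?W = "wreath G n"
  assume "rth_power_type G r (wr_type G n x)"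
  then obtain z where z: "z \<in> carrier ?W" and type: "wr_type G n (z [^]\<^bsub>?W\<^esub> r) = wr_type G n x"
    using rth_power_types_realized[OF fin r wr_type_in_wr_types[OF fin x]] by auto
  obtain u where u: "u \<in> carrier ?W" and "x = u \<otimes>\<^bsub>?W\<^esub> z [^]\<^bsub>?W\<^esub> r \<otimes>\<^bsub>?W\<^esub> inv\<^bsub>?W\<^esub> u"
    using wreath_conj_if_wr_type_eq[OF wreath_pow_closed[OF z] x type] by auto
  then have "x = (u \<otimes>\<^bsub>?W\<^esub> z \<otimes>\<^bsub>?W\<^esub> inv\<^bsub>?W\<^esub> u) [^]\<^bsub>?W\<^esub> r"
    using group.conj_nat_pow[OF wreath_group u z] by simp
  moreover have "u \<otimes>\<^bsub>?W\<^esub> z \<otimes>\<^bsub>?W\<^esub> inv\<^bsub>?W\<^esub> u \<in> carrier ?W"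
    using u z wreath_group by (simp add: group.inv_closed wreath_mult_closed)
  ultimately show "\<exists>w\<in>carrier ?W. x = w [^]\<^bsub>?W\<^esub> r" by auto
qed

theorem CC_wreath:
  assumes fin: "finite (carrier G)" and r: "prime r"
  shows "CC r (wreath G n) = card {T \<in> wr_types G n. rth_power_type G r T}"
proof -
  let ?W = "wreath G n"
  let ?Cls = "{K \<in> conj_classes ?W. is_rth_power_class ?W r K}"
  let ?F = "\<lambda>K. the_elem (wr_type G n ` K)"
  have F: "?F (conj_class ?W x) = wr_type G n x" if "x \<in> carrier ?W" for x
    using wr_type_conj_class[OF that] by simp
  have "bij_betw ?F ?Cls {T \<in> wr_types G n. rth_power_type G r T}"
  proof (rule bij_betw_imageI)
    show "inj_on ?F ?Cls"
    proof (rule inj_onI)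
      fix K1 K2 assume "K1 \<in> ?Cls" "K2 \<in> ?Cls" and eq: "?F K1 = ?F K2"
      then obtain x1 x2 where x: "x1 \<in> carrier ?W" "x2 \<in> carrier ?W"
        and K: "K1 = conj_class ?W x1" "K2 = conj_class ?W x2"
        unfolding conj_classes_def by auto
      then obtain u where "u \<in> carrier ?W" "x2 = u \<otimes>\<^bsub>?W\<^esub> x1 \<otimes>\<^bsub>?W\<^esub> inv\<^bsub>?W\<^esub> u"
        using wreath_conj_if_wr_type_eq[OF x] eq F by auto
      then have "x2 \<in> conj_class ?W x1" unfolding conj_class_def by (intro CollectI exI[of _ u]) simp
      then show "K1 = K2" using group.conj_class_eq_iff[OF wreath_group x] K by simp
    qed
    show "?F ` ?Cls = {T \<in> wr_types G n. rth_power_type G r T}"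
    proof (intro equalityI subsetI)
      fix T assume "T \<in> ?F ` ?Cls"
      then obtain x where "x \<in> carrier ?W" "T = wr_type G n x"
        "is_rth_power_class ?W r (conj_class ?W x)"
        unfolding conj_classes_def using F by auto
      then show "T \<in> {T \<in> wr_types G n. rth_power_type G r T}"
        using wr_type_in_wr_types[OF fin] is_rth_power_class_iff_wr_type[OF fin r] by auto
    next
      fix T assume T: "T \<in> {T \<in> wr_types G n. rth_power_type G r T}"
      then have "\<exists>x\<in>carrier ?W. wr_type G n x = T" using wr_types_realized[OF fin] by simp
      then obtain x where x: "x \<in> carrier ?W" "wr_type G n x = T" ..
      then have "conj_class ?W x \<in> ?Cls"
        using is_rth_power_class_iff_wr_type[OF fin r x(1)] T unfolding conj_classes_def by auto
      then show "T \<in> ?F ` ?Cls" using F[OF x(1)] x(2) by force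
    qed
  qed
  then show ?thesis unfolding CC_def by (rule bij_betw_same_card)
qed

end

section \<open>Counting types\<close>

definition compositions :: "nat \<Rightarrow> nat \<Rightarrow> (nat \<Rightarrow> nat) set" where
  "compositions s n = {t. (\<forall>i. i \<notin> {1..s} \<longrightarrow> t i = 0) \<and> (\<Sum>i=1..s. t i) = n}"

definition class_mults :: "nat \<Rightarrow> nat \<Rightarrow> nat \<Rightarrow> nat \<Rightarrow> (nat \<Rightarrow> nat) set" where
  "class_mults r d i j = {m \<in> partition_mults j.
     if i \<le> d then \<forall>k\<ge>1. r dvd m k else \<forall>k\<ge>1. r dvd m (r * k)}"

lemma card_class_mults: "card (class_mults r d i j) = (if i \<le> d then p_r r j else p_r' r j)"
  by (simp add: class_mults_def p_r_def p_r'_def)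

lemma partition_mults_le:
  assumes "m \<in> partition_mults j"
  shows "m k \<le> j" and "k \<notin> {1..j} \<Longrightarrow> m k = 0"
proof -
  have sum: "(\<Sum>i=1..j. i * m i) = j" and supp: "\<And>i. m i \<noteq> 0 \<Longrightarrow> 1 \<le> i \<and> i \<le> j"
    using assms unfolding partition_mults_def by auto
  show "k \<notin> {1..j} \<Longrightarrow> m k = 0" using supp by force
  show "m k \<le> j"
  proof (cases "m k = 0")
    case False
    then have k: "k \<in> {1..j}" using supp by auto
    have "m k \<le> k * m k" using k by simp
    also have "\<dots> \<le> (\<Sum>i=1..j. i * m i)" using k by (intro member_le_sum) auto
    finally show ?thesis using sum by simp
  qed simp
qed

lemma finite_bounded_funs:
  assumes "finite A"
  shows "finite {m :: nat \<Rightarrow> nat. (\<forall>k. k \<notin> A \<longrightarrow> m k = 0) \<and> (\<forall>k. m k \<le> B)}"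
proof (rule finite_subset)
  show "{m. (\<forall>k. k \<notin> A \<longrightarrow> m k = 0) \<and> (\<forall>k. m k \<le> B)}
      \<subseteq> (\<lambda>g k. if k \<in> A then g k else 0) ` (A \<rightarrow>\<^sub>E {0..B})"
  proof
    fix m assume m: "m \<in> {m. (\<forall>k. k \<notin> A \<longrightarrow> m k = 0) \<and> (\<forall>k. m k \<le> B)}"
    then have "m = (\<lambda>k. if k \<in> A then restrict m A k else 0)" by (auto intro!: ext)
    moreover have "restrict m A \<in> A \<rightarrow>\<^sub>E {0..B}" using m by auto
    ultimately show "m \<in> (\<lambda>g k. if k \<in> A then g k else 0) ` (A \<rightarrow>\<^sub>E {0..B})" by blast
  qed
qed (use assms in \<open>intro finite_imageI finite_PiE, auto\<close>)

lemma finite_partition_mults: "finite (partition_mults j)"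
  by (rule finite_subset[OF _ finite_bounded_funs[of "{1..j}" j]]) (auto dest: partition_mults_le)

lemma finite_class_mults: "finite (class_mults r d i j)"
  by (rule finite_subset[OF _ finite_partition_mults]) (auto simp: class_mults_def)

lemma compositions_le: "t \<in> compositions s n \<Longrightarrow> t i \<le> n"
  unfolding compositions_def
  by (cases "i \<in> {1..s}") (auto intro: order_trans[OF member_le_sum[of i "{1..s}" t]])

lemma finite_compositions: "finite (compositions s n)"
  by (rule finite_subset[OF _ finite_bounded_funs[of "{1..s}" n]])
    (auto simp: compositions_le compositions_def)

lemma sum_partition_mults:
  assumes m: "m \<in> partition_mults j" and j: "j \<le> n"
  shows "(\<Sum>k=1..n. k * m k) = j"
proof -
  have "(\<Sum>k=1..n. k * m k) = (\<Sum>k=1..j. k * m k)"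
    using j partition_mults_le(2)[OF m] by (intro sum.mono_neutral_right) auto
  then show ?thesis using m unfolding partition_mults_def by simp
qed

text \<open>With the conjugacy classes enumerated as \<open>e 1, \<dots>, e s\<close>, a type \<open>T\<close> is recorded by the number of
  points carrying each class together with, for each class, the multiplicities \<open>T (k, e i) div k\<close> of
  the cycle lengths \<open>k\<close>, which form a partition of that number.\<close>

locale class_enumeration =
  fixes G :: "('a, 'b) monoid_scheme" and r d s :: nat and e :: "nat \<Rightarrow> 'a set"
  assumes e: "bij_betw e {1..s} (conj_classes G)"
    and non_rth_first: "\<And>i. i \<in> {1..s} \<Longrightarrow> i \<le> d \<longleftrightarrow> \<not> is_rth_power_class G r (e i)"
begin

definition type_mults :: "nat \<Rightarrow> (nat \<times> 'a set \<Rightarrow> nat) \<Rightarrow> (nat \<Rightarrow> nat) \<times> (nat \<Rightarrow> nat \<Rightarrow> nat)" where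
  "type_mults n T =
    ((\<lambda>i. if i \<in> {1..s} then \<Sum>k=1..n. T (k, e i) else 0), (\<lambda>i\<in>{1..s}. \<lambda>k. T (k, e i) div k))"

definition mults_type :: "(nat \<Rightarrow> nat) \<times> (nat \<Rightarrow> nat \<Rightarrow> nat) \<Rightarrow> nat \<times> 'a set \<Rightarrow> nat" where
  "mults_type p = (\<lambda>(k, C). if C \<in> conj_classes G then k * snd p (inv_into {1..s} e C) k else 0)"

lemma e_in: "i \<in> {1..s} \<Longrightarrow> e i \<in> conj_classes G"
  by (rule bij_betw_apply[OF e])

lemma index_in: "C \<in> conj_classes G \<Longrightarrow> inv_into {1..s} e C \<in> {1..s}"
  and e_index: "C \<in> conj_classes G \<Longrightarrow> e (inv_into {1..s} e C) = C"
  using e by (metis bij_betw_def inv_into_into, metis bij_betw_def f_inv_into_f)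

lemma index_e: "i \<in> {1..s} \<Longrightarrow> inv_into {1..s} e (e i) = i"
  by (rule bij_betw_inv_into_left[OF e])

lemma sum_by_class: "(\<Sum>v\<in>{1..n} \<times> conj_classes G. T v) = (\<Sum>i=1..s. \<Sum>k=1..n. T (k, e i))"
proof -
  have "(\<Sum>v\<in>{1..n} \<times> conj_classes G. T v) = (\<Sum>k=1..n. \<Sum>C\<in>conj_classes G. T (k, C))"
    by (simp add: sum.cartesian_product)
  also have "\<dots> = (\<Sum>C\<in>conj_classes G. \<Sum>k=1..n. T (k, C))"
    by (rule sum.swap)
  also have "\<dots> = (\<Sum>i=1..s. \<Sum>k=1..n. T (k, e i))"
    using sum.reindex_bij_betw[OF e, of "\<lambda>C. \<Sum>k=1..n. T (k, C)"] by simp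
  finally show ?thesis .
qed

lemma type_row_partition:
  assumes T: "T \<in> wr_types G n" and i: "i \<in> {1..s}"
  shows "(\<lambda>k. T (k, e i) div k) \<in> partition_mults (\<Sum>k=1..n. T (k, e i))"
proof -
  let ?row = "\<Sum>k=1..n. T (k, e i)"
  have dvd: "k dvd T (k, e i)" for k using T unfolding wr_types_def by auto
  have row_le: "?row \<le> n"
    using member_le_sum[of i "{1..s}" "\<lambda>i. \<Sum>k=1..n. T (k, e i)"] i T sum_by_class[where n=n and T=T]
    unfolding wr_types_def by simp
  have supp: "1 \<le> k \<and> k \<le> ?row" if nz: "T (k, e i) \<noteq> 0" for k
  proof -
    have k: "1 \<le> k \<and> k \<le> n" using T nz unfolding wr_types_def by auto
    then have "T (k, e i) \<le> ?row" by (intro member_le_sum) auto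
    moreover have "k \<le> T (k, e i)" using dvd[of k] nz by (simp add: dvd_imp_le)
    ultimately show ?thesis using k by simp
  qed
  have "(\<Sum>k=1..?row. k * (T (k, e i) div k)) = (\<Sum>k=1..?row. T (k, e i))"
    using dvd by (intro sum.cong) auto
  also have "\<dots> = ?row"
    using row_le supp by (intro sum.mono_neutral_left) force+
  finally have "(\<Sum>k=1..?row. k * (T (k, e i) div k)) = ?row" .
  moreover have "1 \<le> k \<and> k \<le> ?row" if "T (k, e i) div k \<noteq> 0" for k
    using supp[of k] that by fastforce
  ultimately show ?thesis
    unfolding partition_mults_def by auto
qed

lemma type_row_class_mults:
  assumes T: "T \<in> wr_types G n" and rth: "rth_power_type G r T" and i: "i \<in> {1..s}"
  shows "(\<lambda>k. T (k, e i) div k) \<in> class_mults r d i (\<Sum>k=1..n. T (k, e i))"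
proof -
  have "r dvd T (k, e i) div k" if "i \<le> d" for k
    using rth that non_rth_first[OF i] unfolding rth_power_type_def by (simp add: dvd_mult_imp_div)
  moreover have "r dvd T (r * k, e i) div (r * k)" for k
  proof -
    have "r * (r * k) dvd T (r * k, e i)" using rth unfolding rth_power_type_def by simp
    then show ?thesis by (rule dvd_mult_imp_div)
  qed
  ultimately show ?thesis
    unfolding class_mults_def using type_row_partition[OF T i] by simp
qed

lemma type_mults_in:
  assumes T: "T \<in> wr_types G n" and rth: "rth_power_type G r T"
  shows "type_mults n T \<in> Sigma (compositions s n) (\<lambda>t. \<Pi>\<^sub>E i\<in>{1..s}. class_mults r d i (t i))"
proof -
  have "fst (type_mults n T) \<in> compositions s n"
    using T sum_by_class[where n=n and T=T] unfolding compositions_def type_mults_def wr_types_def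
    by simp
  moreover have "snd (type_mults n T) \<in> (\<Pi>\<^sub>E i\<in>{1..s}. class_mults r d i (fst (type_mults n T) i))"
    using type_row_class_mults[OF T rth] unfolding type_mults_def by simp
  ultimately show ?thesis by (metis SigmaI prod.collapse)
qed

lemma mults_type_apply:
  "mults_type p (k, C) = (if C \<in> conj_classes G then k * snd p (inv_into {1..s} e C) k else 0)"
  unfolding mults_type_def by simp

lemma mults_type_class: "i \<in> {1..s} \<Longrightarrow> mults_type (t, M) (k, e i) = k * M i k"
  using e_in index_e by (simp add: mults_type_apply)

lemma mults_type_in_wr_types:
  assumes t: "t \<in> compositions s n" and M: "M \<in> (\<Pi>\<^sub>E i\<in>{1..s}. class_mults r d i (t i))"
  shows "mults_type (t, M) \<in> wr_types G n"
proof -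
  have pm: "M i \<in> partition_mults (t i)" if "i \<in> {1..s}" for i
    using PiE_mem[OF M that] unfolding class_mults_def by simp
  have supp: "1 \<le> k \<and> k \<le> n \<and> C \<in> conj_classes G" if nz: "mults_type (t, M) (k, C) \<noteq> 0" for k C
  proof -
    have C: "C \<in> conj_classes G"
    proof (rule ccontr)
      assume "C \<notin> conj_classes G"
      then show False using nz by (simp add: mults_type_apply)
    qed
    then have "M (inv_into {1..s} e C) k \<noteq> 0" using nz by (simp add: mults_type_apply)
    then have "k \<in> {1..t (inv_into {1..s} e C)}"
      using partition_mults_le(2)[OF pm[OF index_in[OF C]], of k] by (rule contrapos_np)
    then show ?thesis using compositions_le[OF t, of "inv_into {1..s} e C"] C by auto
  qed
  have "(\<Sum>k=1..n. mults_type (t, M) (k, e i)) = t i" if "i \<in> {1..s}" for i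
    using sum_partition_mults[OF pm[OF that] compositions_le[OF t]] mults_type_class[OF that] by simp
  then have "(\<Sum>v\<in>{1..n} \<times> conj_classes G. mults_type (t, M) v) = n"
    unfolding sum_by_class using t unfolding compositions_def by simp
  moreover have "k dvd mults_type (t, M) (k, C)" for k C
    by (simp add: mults_type_apply)
  ultimately show ?thesis
    unfolding wr_types_def using supp by blast
qed

lemma mults_type_rth_power_type:
  assumes M: "M \<in> (\<Pi>\<^sub>E i\<in>{1..s}. class_mults r d i (t i))"
  shows "rth_power_type G r (mults_type (t, M))"
  unfolding rth_power_type_def
proof (intro allI impI)
  fix k C assume kC: "\<not> is_rth_power_class G r C \<or> r dvd k"
  show "r * k dvd mults_type (t, M) (k, C)"
  proof (cases "C \<in> conj_classes G \<and> k \<noteq> 0")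
    case True
    let ?i = "inv_into {1..s} e C"
    have i: "?i \<in> {1..s}" and ei: "e ?i = C" using index_in e_index True by auto
    have "M ?i \<in> class_mults r d ?i (t ?i)" using M i by (rule PiE_mem)
    then have cond: "if ?i \<le> d then \<forall>k\<ge>1. r dvd M ?i k else \<forall>k\<ge>1. r dvd M ?i (r * k)"
      unfolding class_mults_def by simp
    have k: "1 \<le> k" using True by simp
    have "r dvd M ?i k"
    proof (cases "?i \<le> d")
      case True
      then show ?thesis using cond k by simp
    next
      case False
      then have "r dvd k" using kC non_rth_first[OF i] ei by simp
      then obtain k' where k': "k = r * k'" by (elim dvdE)
      then have "1 \<le> k'" using k by (cases k') simp_all
      then show ?thesis using cond False k' by simp
    qed
    then show ?thesis using True by (simp add: mults_type_apply)
  qed (auto simp: mults_type_apply)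
qed

lemma mults_type_type_mults:
  assumes T: "T \<in> wr_types G n"
  shows "mults_type (type_mults n T) = T"
proof
  fix v :: "nat \<times> 'a set"
  obtain k C where v: "v = (k, C)" by (cases v)
  show "mults_type (type_mults n T) v = T v"
  proof (cases "C \<in> conj_classes G")
    case True
    moreover have "k dvd T (k, C)" using T unfolding wr_types_def by auto
    ultimately show ?thesis
      unfolding type_mults_def v using index_in e_index by (simp add: mults_type_apply)
  next
    case False
    then have "T (k, C) = 0" using T unfolding wr_types_def by auto
    then show ?thesis using False unfolding v by (simp add: mults_type_apply)
  qed
qed

lemma type_mults_mults_type:
  assumes t: "t \<in> compositions s n" and M: "M \<in> (\<Pi>\<^sub>E i\<in>{1..s}. class_mults r d i (t i))"
  shows "type_mults n (mults_type (t, M)) = (t, M)"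
proof -
  have pm: "M i \<in> partition_mults (t i)" if "i \<in> {1..s}" for i
    using PiE_mem[OF M that] unfolding class_mults_def by simp
  have "fst (type_mults n (mults_type (t, M))) i = t i" for i
  proof (cases "i \<in> {1..s}")
    case True
    then show ?thesis
      using sum_partition_mults[OF pm[OF True] compositions_le[OF t]]
      unfolding type_mults_def by (simp add: mults_type_class)
  qed (use t in \<open>auto simp: type_mults_def compositions_def\<close>)
  moreover have "snd (type_mults n (mults_type (t, M))) i = M i" for i
  proof (cases "i \<in> {1..s}")
    case True
    have "mults_type (t, M) (k, e i) div k = M i k" for k
      using partition_mults_le(2)[OF pm[OF True], of 0] True
      by (cases "k = 0") (simp_all add: mults_type_class)
    then show ?thesis using True unfolding type_mults_def by auto
  qed (use PiE_arb[OF M] in \<open>auto simp: type_mults_def\<close>)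
  ultimately show ?thesis by (simp add: prod_eq_iff ext)
qed

lemma card_rth_power_types:
  "card {T \<in> wr_types G n. rth_power_type G r T}
    = (\<Sum>t\<in>compositions s n. \<Prod>i=1..s. card (class_mults r d i (t i)))"
proof -
  have "bij_betw (type_mults n) {T \<in> wr_types G n. rth_power_type G r T}
      (Sigma (compositions s n) (\<lambda>t. \<Pi>\<^sub>E i\<in>{1..s}. class_mults r d i (t i)))"
  proof (rule bij_betw_byWitness[where f' = mults_type])
    show "\<forall>T\<in>{T \<in> wr_types G n. rth_power_type G r T}. mults_type (type_mults n T) = T"
      using mults_type_type_mults by blast
    show "\<forall>p\<in>Sigma (compositions s n) (\<lambda>t. \<Pi>\<^sub>E i\<in>{1..s}. class_mults r d i (t i)).
        type_mults n (mults_type p) = p"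
      using type_mults_mults_type by blast
    show "type_mults n ` {T \<in> wr_types G n. rth_power_type G r T}
        \<subseteq> Sigma (compositions s n) (\<lambda>t. \<Pi>\<^sub>E i\<in>{1..s}. class_mults r d i (t i))"
      using type_mults_in by blast
    show "mults_type ` Sigma (compositions s n) (\<lambda>t. \<Pi>\<^sub>E i\<in>{1..s}. class_mults r d i (t i))
        \<subseteq> {T \<in> wr_types G n. rth_power_type G r T}"
      using mults_type_in_wr_types mults_type_rth_power_type by blast
  qed
  then have "card {T \<in> wr_types G n. rth_power_type G r T}
      = card (Sigma (compositions s n) (\<lambda>t. \<Pi>\<^sub>E i\<in>{1..s}. class_mults r d i (t i)))"
    by (rule bij_betw_same_card)
  also have "\<dots> = (\<Sum>t\<in>compositions s n. \<Prod>i=1..s. card (class_mults r d i (t i)))"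
    using finite_compositions finite_class_mults
    by (subst card_SigmaI) (auto simp: card_PiE intro!: finite_PiE)
  finally show ?thesis .
qed

end

lemma prod_card_class_mults:
  assumes "d \<le> s"
  shows "(\<Prod>i=1..s. card (class_mults r d i (t i)))
    = (\<Prod>i=1..d. p_r r (t i)) * (\<Prod>i=d+1..s. p_r' r (t i))"
proof -
  have "{1..s} = {1..d} \<union> {d+1..s}" using assms by auto
  then have "(\<Prod>i=1..s. card (class_mults r d i (t i)))
      = (\<Prod>i=1..d. card (class_mults r d i (t i))) * (\<Prod>i=d+1..s. card (class_mults r d i (t i)))"
    by (simp add: prod.union_disjoint)
  then show ?thesis by (simp add: card_class_mults)
qed

lemma ex_enumeration_failing_first:
  assumes fin: "finite A" and s: "s = card A" and d: "d = card {a \<in> A. \<not> P a}"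
  obtains e where "bij_betw e {1..s} A" and "\<And>i. i \<in> {1..s} \<Longrightarrow> i \<le> d \<longleftrightarrow> \<not> P (e i)" and "d \<le> s"
proof -
  let ?F = "{a \<in> A. \<not> P a}" and ?T = "{a \<in> A. P a}"
  have "card (?F \<union> ?T) = card ?F + card ?T" using fin by (intro card_Un_disjoint) auto
  moreover have FT: "?F \<union> ?T = A" by auto
  ultimately have card: "card A = card ?F + card ?T" by simp
  obtain e1 where e1: "bij_betw e1 {1..d} ?F"
    using ex_bij_betw_nat_finite_1[of ?F] fin d by auto
  obtain e2 where e2: "bij_betw e2 {1..s - d} ?T"
    using ex_bij_betw_nat_finite_1[of ?T] fin card s d by auto
  define e where "e i = (if i \<le> d then e1 i else e2 (i - d))" for i
  have "bij_betw e {1..d} ?F"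
    using e1 by (rule bij_betw_cong[THEN iffD1, rotated]) (simp add: e_def)
  moreover have "bij_betw (\<lambda>i. i - d) {d+1..s} {1..s - d}"
    by (rule bij_betw_byWitness[where f' = "\<lambda>j. j + d"]) auto
  then have "bij_betw (e2 \<circ> (\<lambda>i. i - d)) {d+1..s} ?T" using e2 by (rule bij_betw_trans)
  then have "bij_betw e {d+1..s} ?T"
    by (rule bij_betw_cong[THEN iffD1, rotated]) (simp add: e_def)
  ultimately have "bij_betw e ({1..d} \<union> {d+1..s}) (?F \<union> ?T)"
    by (rule bij_betw_combine) auto
  moreover have "{1..d} \<union> {d+1..s} = {1..s}" using card s d by auto
  ultimately have "bij_betw e {1..s} A" unfolding FT by simp
  moreover have "i \<le> d \<longleftrightarrow> \<not> P (e i)" if "i \<in> {1..s}" for i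
    using bij_betw_apply[OF \<open>bij_betw e {1..d} ?F\<close>] bij_betw_apply[OF \<open>bij_betw e {d+1..s} ?T\<close>] that
    by (cases "i \<le> d") auto
  ultimately show ?thesis using that card s d by simp
qed

theorem theorem5p9:
  fixes G :: "('a, 'b) monoid_scheme" and r n s d :: nat
  assumes "prime r"
    and "group G" and "finite (carrier G)"
    and "s = card (conj_classes G)"
    and "d = card {C \<in> conj_classes G. \<not> is_rth_power_class G r C}"
  shows "CC r (wreath G n) =
    (\<Sum>t \<in> {t :: nat \<Rightarrow> nat. (\<forall>i. i \<notin> {1..s} \<longrightarrow> t i = 0) \<and> (\<Sum>i=1..s. t i) = n}.
       (\<Prod>i=1..d. p_r r (t i)) * (\<Prod>i=d+1..s. p_r' r (t i)))"
proof -
  interpret group G by fact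
  have classes: "finite (conj_classes G)" using finite_conj_classes \<open>finite (carrier G)\<close> .
  obtain e where "bij_betw e {1..s} (conj_classes G)"
    and "\<And>i. i \<in> {1..s} \<Longrightarrow> i \<le> d \<longleftrightarrow> \<not> is_rth_power_class G r (e i)" and "d \<le> s"
    using ex_enumeration_failing_first[OF classes assms(4,5)] by metis
  then interpret class_enumeration G r d s e
    by unfold_locales
  have "CC r (wreath G n) = card {T \<in> wr_types G n. rth_power_type G r T}"
    using CC_wreath \<open>finite (carrier G)\<close> \<open>prime r\<close> .
  also have "\<dots> = (\<Sum>t\<in>compositions s n. \<Prod>i=1..s. card (class_mults r d i (t i)))"
    by (rule card_rth_power_types)
  also have "\<dots> = (\<Sum>t\<in>compositions s n. (\<Prod>i=1..d. p_r r (t i)) * (\<Prod>i=d+1..s. p_r' r (t i)))"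
    using prod_card_class_mults[OF \<open>d \<le> s\<close>] by simp
  finally show ?thesis unfolding compositions_def .
qed

end
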